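(* Let $(E,[\![\cdot,\cdot]\!],\langle\cdot,\cdot\rangle,\rho)$ be a Courant algebroid over $M$ with Courant–Dorfman algebra $\mathcal C=\bigoplus_{p\ge0}\mathcal C^p$ and differential $d$ as in the context. For all $\omega\in\mathcal C^p$ and $\eta\in\mathcal C^q$, $$d(\omega\cdot\eta)=d\omega\cdot\eta+(-1)^p\,\omega\cdot d\eta .$$
   Context: Let $M$ be a smooth manifold, $\mathcal R=C^\infty(M)$, $\Omega^1=\Gamma(T^*M)$. A Courant algebroid is a vector bundle $E\to M$ with a fibrewise nondegenerate symmetric bilinear form $\langle\cdot,\cdot\rangle$, an $\mathbb R$-bilinear bracket $[\![\cdot,\cdot]\!]$ on $\Gamma(E)$ and a bundle map $\rho:E\to TM$ such that for all $e_1,e_2,e_3\in\Gamma(E)$: $[\![e_1,[\![e_2,e_3]\!]]\!]=[\![[\![e_1,e_2]\!],e_3]\!]+[\![e_2,[\![e_1,e_3]\!]]\!]$; $\rho(e_1)\langle e_2,e_3\rangle=\langle[\![e_1,e_2]\!],e_3\rangle+\langle e_2,[\![e_1,e_3]\!]\rangle$; $[\![e_1,e_2]\!]+[\![e_2,e_1]\!]=d_E\langle e_1,e_2\rangle$, where $d_E:\mathcal R\to\Gamma(E)$ is defined by $\langle d_Ef,e\rangle=\rho(e)(f)$. Write $\mathcal E=\Gamma(E)$. Cochains. For $p\ge1$ a $p$-cochain is a tuple $\omega=(\omega_0,\dots,\omega_{[p/2]})$ of $\mathbb R$-multilinear maps $\omega_k:\mathcal E^{\otimes(p-2k)}\otimes(\Omega^1)^{\otimes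 k}\to\mathcal R$, symmetric in the $\Omega^1$-arguments, such that for $1\le i<p-2k$: $\omega_k(\dots,e_i,e_{i+1},\dots;\alpha_1,\dots,\alpha_k)+\omega_k(\dots,e_{i+1},e_i,\dots;\alpha_1,\dots,\alpha_k)=-\omega_{k+1}(\dots,\widehat{e_i},\widehat{e_{i+1}},\dots;d\langle e_i,e_{i+1}\rangle,\alpha_1,\dots,\alpha_k)$. $0$-cochains are elements of $\mathcal R$. These form a graded algebra $\mathcal A$ with product: for $\omega$ of degree $p$, $\eta$ of degree $q$, $(\omega\cdot\eta)_k(e_1,\dots,e_{p+q-2k};\alpha_1,\dots,\alpha_k)=\sum_{i+j=k,\,i\le[p/2],\,j\le[q/2]}\ \sum_{\sigma\in sh(p-2i,q-2j)}\sum_{\tau\in sh(i,j)}(-1)^{|\sigma|}\omega_i(e_{\sigma(1)},\dots,e_{\sigma(p-2i)};\alpha_{\tau(1)},\dots,\alpha_{\tau(i)})\,\eta_j(e_{\sigma(p-2i+1)},\dots,e_{\sigma(p+q-2k)};\alpha_{\tau(i+1)},\dots,\alpha_{\tau(k)})$, where $sh(a,b)$ is the set of $(a,b)$-shuffles and $(-1)^{|\sigma|}$ the sign. The Courant–Dorfman algebra $\mathcal C=\bigoplus_p\mathcal C^p$ consists of $\mathcal C^0=\mathcal R$ and those $p$-cochains with each $\omega_k$ $\mathcal R$-linear in every $\Omega^1$-argument and in the last $\mathcal E$-argument. Write $\omega_k(e_1,\dots;f_1,\dots,f_k):=\omega_k(e_1,\dots;df_1,\dots,df_k)$. The differential $d:\mathcal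 C^p\to\mathcal C^{p+1}$ is $(d\omega)_k(e_1,\dots,e_{p+1-2k};f_1,\dots,f_k)=\sum_{\mu=1}^k\omega_{k-1}(d_Ef_\mu,e_1,\dots,e_{p+1-2k};f_1,\dots,\widehat{f_\mu},\dots,f_k)+\sum_{i=1}^{p+1-2k}(-1)^{i-1}\rho(e_i)\big(\omega_k(e_1,\dots,\widehat{e_i},\dots;f_1,\dots,f_k)\big)+\sum_{i<j}(-1)^i\omega_k(e_1,\dots,\widehat{e_i},\dots,\widehat{e_j},[\![e_i,e_j]\!],e_{j+1},\dots,e_{p+1-2k};f_1,\dots,f_k)$ (for $p=0$: $(df)(e)=\rho(e)f$). *)

theory Defs
  imports Complex_Main "HOL-Combinatorics.Permutations" "HOL-Library.Multiset"
begin

text \<open>Abstract algebraic rendering of a Courant algebroid over M.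
  'r plays the role of R = smooth functions on M (a commutative real algebra),
  'e the sections of E, 'o the 1-forms Omega^1, with module actions smE, smO,
  de Rham differential dR : R -> Omega^1, pairing ip, bracket br, anchor rho
  (rho e f = rho(e)(f)) and dE : R -> sections of E.\<close>

definition module_ax :: "('r::comm_ring_1 \<Rightarrow> 'm::ab_group_add \<Rightarrow> 'm) \<Rightarrow> bool" where
  "module_ax sm \<longleftrightarrow>
     (\<forall>a b x. sm (a * b) x = sm a (sm b x)) \<and> (\<forall>x. sm 1 x = x) \<and>
     (\<forall>a b x. sm (a + b) x = sm a x + sm b x) \<and> (\<forall>a x y. sm a (x + y) = sm a x + sm a y)"

definition courant_algebroid ::
  "('r::{comm_ring_1,real_algebra_1} \<Rightarrow> 'e::ab_group_add \<Rightarrow> 'e) \<Rightarrow> ('r \<Rightarrow> 'o::ab_group_add \<Rightarrow> 'o)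
   \<Rightarrow> ('r \<Rightarrow> 'o) \<Rightarrow> ('e \<Rightarrow> 'e \<Rightarrow> 'r) \<Rightarrow> ('e \<Rightarrow> 'e \<Rightarrow> 'e) \<Rightarrow> ('e \<Rightarrow> 'r \<Rightarrow> 'r) \<Rightarrow> ('r \<Rightarrow> 'e) \<Rightarrow> bool"
where
  "courant_algebroid smE smO dR ip br rho dE \<longleftrightarrow>
     module_ax smE \<and> module_ax smO \<and>
     \<comment> \<open>de Rham differential on functions\<close>
     (\<forall>f g. dR (f + g) = dR f + dR g) \<and>
     (\<forall>c f. dR (scaleR c f) = smO (of_real c) (dR f)) \<and>
     (\<forall>f g. dR (f * g) = smO f (dR g) + smO g (dR f)) \<and>
     \<comment> \<open>symmetric, R-bilinear, nondegenerate pairing\<close>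
     (\<forall>x y. ip x y = ip y x) \<and>
     (\<forall>x y z. ip (x + y) z = ip x z + ip y z) \<and>
     (\<forall>g x y. ip (smE g x) y = g * ip x y) \<and>
     (\<forall>x. (\<forall>y. ip x y = 0) \<longrightarrow> x = 0) \<and>
     \<comment> \<open>anchor: R-linear in sections, each rho(e) a vector field (R-linear derivation)\<close>
     (\<forall>x y f. rho (x + y) f = rho x f + rho y f) \<and>
     (\<forall>g x f. rho (smE g x) f = g * rho x f) \<and>
     (\<forall>x f g. rho x (f + g) = rho x f + rho x g) \<and>
     (\<forall>x c f. rho x (scaleR c f) = scaleR c (rho x f)) \<and>
     (\<forall>x f g. rho x (f * g) = f * rho x g + g * rho x f) \<and>
     \<comment> \<open>R-bilinear bracket (real scalars act through of_real)\<close>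
     (\<forall>x y z. br (x + y) z = br x z + br y z) \<and>
     (\<forall>x y z. br x (y + z) = br x y + br x z) \<and>
     (\<forall>c x y. br (smE (of_real c) x) y = smE (of_real c) (br x y)) \<and>
     (\<forall>c x y. br x (smE (of_real c) y) = smE (of_real c) (br x y)) \<and>
     \<comment> \<open>definition of d_E\<close>
     (\<forall>f e. ip (dE f) e = rho e f) \<and>
     \<comment> \<open>Courant algebroid axioms\<close>
     (\<forall>e1 e2 e3. br e1 (br e2 e3) = br (br e1 e2) e3 + br e2 (br e1 e3)) \<and>
     (\<forall>e1 e2 e3. rho e1 (ip e2 e3) = ip (br e1 e2) e3 + ip e2 (br e1 e3)) \<and>
     (\<forall>e1 e2. br e1 e2 + br e2 e1 = dE (ip e1 e2))"

definition del :: "nat \<Rightarrow> 'a list \<Rightarrow> 'a list" where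
  "del i xs = take i xs @ drop (Suc i) xs"

text \<open>A p-cochain: component omega k takes p-2k section arguments and k 1-form arguments
  (positions are 0-based).\<close>
definition cochain ::
  "('r::{comm_ring_1,real_algebra_1} \<Rightarrow> 'e::ab_group_add \<Rightarrow> 'e) \<Rightarrow> ('r \<Rightarrow> 'o::ab_group_add \<Rightarrow> 'o)
   \<Rightarrow> ('r \<Rightarrow> 'o) \<Rightarrow> ('e \<Rightarrow> 'e \<Rightarrow> 'r) \<Rightarrow> nat \<Rightarrow> (nat \<Rightarrow> 'e list \<Rightarrow> 'o list \<Rightarrow> 'r) \<Rightarrow> bool"
where
  "cochain smE smO dR ip p \<omega> \<longleftrightarrow>
    (\<forall>k \<le> p div 2. \<forall>es \<alpha>s. length es = p - 2 * k \<longrightarrow> length \<alpha>s = k \<longrightarrow>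
      (\<forall>i < length es. \<forall>x y. \<omega> k (es[i := x + y]) \<alpha>s = \<omega> k (es[i := x]) \<alpha>s + \<omega> k (es[i := y]) \<alpha>s) \<and>
      (\<forall>i < length es. \<forall>c x. \<omega> k (es[i := smE (of_real c) x]) \<alpha>s = of_real c * \<omega> k (es[i := x]) \<alpha>s) \<and>
      (\<forall>j < k. \<forall>\<beta> \<gamma>. \<omega> k es (\<alpha>s[j := \<beta> + \<gamma>]) = \<omega> k es (\<alpha>s[j := \<beta>]) + \<omega> k es (\<alpha>s[j := \<gamma>])) \<and>
      (\<forall>j < k. \<forall>c \<beta>. \<omega> k es (\<alpha>s[j := smO (of_real c) \<beta>]) = of_real c * \<omega> k es (\<alpha>s[j := \<beta>])) \<and>
      (\<forall>\<beta>s. mset \<beta>s = mset \<alpha>s \<longrightarrow> \<omega> k es \<beta>s = \<omega> k es \<alpha>s) \<and>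
      (\<forall>i. Suc i < length es \<longrightarrow>
          \<omega> k es \<alpha>s + \<omega> k (es[i := es ! Suc i, Suc i := es ! i]) \<alpha>s =
          - \<omega> (Suc k) (take i es @ drop (i + 2) es) (dR (ip (es ! i) (es ! Suc i)) # \<alpha>s)))"

text \<open>Elements of the Courant-Dorfman algebra C^p (for p = 0 only omega 0 [] [] matters).\<close>
definition cd_cochain ::
  "('r::{comm_ring_1,real_algebra_1} \<Rightarrow> 'e::ab_group_add \<Rightarrow> 'e) \<Rightarrow> ('r \<Rightarrow> 'o::ab_group_add \<Rightarrow> 'o)
   \<Rightarrow> ('r \<Rightarrow> 'o) \<Rightarrow> ('e \<Rightarrow> 'e \<Rightarrow> 'r) \<Rightarrow> nat \<Rightarrow> (nat \<Rightarrow> 'e list \<Rightarrow> 'o list \<Rightarrow> 'r) \<Rightarrow> bool"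
where
  "cd_cochain smE smO dR ip p \<omega> \<longleftrightarrow> cochain smE smO dR ip p \<omega> \<and>
    (\<forall>k \<le> p div 2. \<forall>es \<alpha>s. length es = p - 2 * k \<longrightarrow> length \<alpha>s = k \<longrightarrow>
      (\<forall>j < k. \<forall>g \<beta>. \<omega> k es (\<alpha>s[j := smO g \<beta>]) = g * \<omega> k es (\<alpha>s[j := \<beta>])) \<and>
      (es \<noteq> [] \<longrightarrow> (\<forall>g x. \<omega> k (es[length es - 1 := smE g x]) \<alpha>s = g * \<omega> k (es[length es - 1 := x]) \<alpha>s)))"

definition shuffles :: "nat \<Rightarrow> nat \<Rightarrow> (nat \<Rightarrow> nat) set" where
  "shuffles a b = {\<sigma>. \<sigma> permutes {..<a + b} \<and>
      (\<forall>x y. x < y \<and> y < a \<longrightarrow> \<sigma> x < \<sigma> y) \<and>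
      (\<forall>x y. a \<le> x \<and> x < y \<and> y < a + b \<longrightarrow> \<sigma> x < \<sigma> y)}"

definition cprod ::
  "nat \<Rightarrow> (nat \<Rightarrow> 'e list \<Rightarrow> 'a list \<Rightarrow> 'r::comm_ring_1) \<Rightarrow> nat \<Rightarrow> (nat \<Rightarrow> 'e list \<Rightarrow> 'a list \<Rightarrow> 'r)
   \<Rightarrow> nat \<Rightarrow> 'e list \<Rightarrow> 'a list \<Rightarrow> 'r"
where
  "cprod p \<omega> q \<eta> k es \<alpha>s =
    (\<Sum>i \<in> {i. i \<le> k \<and> i \<le> p div 2 \<and> k - i \<le> q div 2}.
      \<Sum>\<sigma> \<in> shuffles (p - 2 * i) (q - 2 * (k - i)). \<Sum>\<tau> \<in> shuffles i (k - i).
        of_int (sign \<sigma>) * \<omega> i (map (\<lambda>l. es ! \<sigma> l) [0..<p - 2 * i]) (map (\<lambda>l. \<alpha>s ! \<tau> l) [0..<i])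
               * \<eta> (k - i) (map (\<lambda>l. es ! \<sigma> l) [p - 2 * i..<p + q - 2 * k]) (map (\<lambda>l. \<alpha>s ! \<tau> l) [i..<k]))"

text \<open>The notation omega_k(e;f_1..f_k) := omega_k(e;df_1..df_k).\<close>
definition toF :: "('r \<Rightarrow> 'o) \<Rightarrow> (nat \<Rightarrow> 'e list \<Rightarrow> 'o list \<Rightarrow> 'r) \<Rightarrow> nat \<Rightarrow> 'e list \<Rightarrow> 'r list \<Rightarrow> 'r" where
  "toF dR \<omega> k es fs = \<omega> k es (map dR fs)"

text \<open>The differential (component k), with 0-based indices: (-1)^(i-1) becomes (-1)^i and
  (-1)^i becomes (-1)^(i+1).\<close>
definition dF ::
  "('e \<Rightarrow> 'e \<Rightarrow> 'e) \<Rightarrow> ('e \<Rightarrow> 'r::comm_ring_1 \<Rightarrow> 'r) \<Rightarrow> ('r \<Rightarrow> 'e)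
   \<Rightarrow> (nat \<Rightarrow> 'e list \<Rightarrow> 'r list \<Rightarrow> 'r) \<Rightarrow> nat \<Rightarrow> 'e list \<Rightarrow> 'r list \<Rightarrow> 'r"
where
  "dF br rho dE \<omega> k es fs =
     (\<Sum>\<mu> < k. \<omega> (k - 1) (dE (fs ! \<mu>) # es) (del \<mu> fs))
   + (\<Sum>i < length es. (-1) ^ i * rho (es ! i) (\<omega> k (del i es) fs))
   + (\<Sum>j < length es. \<Sum>i < j. (-1) ^ Suc i * \<omega> k (del i (es[j := br (es ! i) (es ! j)])) fs)"

end

theory Submission
  imports Defs
begin

text \<open>
  Both sides are computed on the product written as a sum over index sets: a shuffle \<sigma> of the
  section arguments is determined by the set S of positions handed to \<omega> (likewise T for the
  1-form arguments), and its sign is \<open>(-1)\<close> to the number \<open>\<Sum>S - \<Sum>{..<card S}\<close> of its inversions.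
  The differential is the sum of three operators: inserting \<open>d\<^sub>E f\<^sub>\<mu>\<close> in front of the sections,
  the anchor term and the bracket term. Each of them is a graded derivation of the product: in a
  term of \<open>d(\<omega>\<cdot>\<eta>)\<close> the new section \<open>d\<^sub>E f\<^sub>\<mu>\<close>, the section \<open>e\<^sub>i\<close> acted on by the anchor, or the bracket
  \<open>[e\<^sub>i, e\<^sub>j]\<close> is an argument either of \<omega> or of \<eta>, and renumbering the index sets identifies the two
  groups of terms with those of \<open>d\<omega>\<cdot>\<eta>\<close> and \<open>(-1)\<^sup>p \<omega>\<cdot>d\<eta>\<close>. For the anchor term one also needs the
  Leibniz rule for \<rho>(e).
\<close>

section \<open>Sublists selected by index sets\<close>

lemma nths_cong:
  assumes "\<And>i. i < length xs \<Longrightarrow> i \<in> A \<longleftrightarrow> i \<in> B"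
  shows "nths xs A = nths xs B"
  unfolding nths_def using assms by (auto intro!: arg_cong[where f="map fst"] filter_cong simp: set_zip)

lemma nths_Compl: "nths xs (- A) = nths xs ({..<length xs} - A)"
  by (rule nths_cong) auto

lemma nths_split_at:
  assumes "i < length xs"
  shows "nths xs A = nths (take i xs) A @ (if i \<in> A then [xs ! i] else [])
    @ nths (drop (Suc i) xs) {j. j + Suc i \<in> A}"
proof -
  have "xs = take i xs @ xs ! i # drop (Suc i) xs"
    using assms by (simp add: id_take_nth_drop)
  then have "nths xs A = nths (take i xs @ xs ! i # drop (Suc i) xs) A"
    by simp
  then show ?thesis
    using assms by (simp add: nths_append nths_Cons min_def)
qed

lemma map_nth_eq_nths:
  assumes "sorted_wrt (<) L" "\<forall>l\<in>set L. l < length xs"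
  shows "map ((!) xs) L = nths xs (set L)"
  using assms
proof (induction L)
  case Nil
  then show ?case by simp
next
  case (Cons l L)
  then have gt: "\<forall>x\<in>set L. l < x" and l: "l < length xs"
    by auto
  have "nths (take l xs) (insert l (set L)) = []" "nths (take l xs) (set L) = []"
    by (subst nths_cong[where B="{}"], use gt in auto)+
  moreover have "{j. j + Suc l \<in> insert l (set L)} = {j. j + Suc l \<in> set L}"
    by auto
  ultimately have "nths xs (insert l (set L)) = xs ! l # nths xs (set L)"
    using nths_split_at[OF l, of "insert l (set L)"] nths_split_at[OF l, of "set L"] gt by auto
  then show ?case
    using Cons by simp
qed

lemma length_nths_subset: "A \<subseteq> {..<length xs} \<Longrightarrow> length (nths xs A) = card A"
  unfolding length_nths by (rule arg_cong[where f=card]) auto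

lemma length_del: "i < length xs \<Longrightarrow> length (del i xs) = length xs - 1"
  unfolding del_def by simp

definition skip :: "nat \<Rightarrow> nat set \<Rightarrow> nat set" where
  "skip i S = (\<lambda>s. if s < i then s else Suc s) ` S"

definition ins :: "nat \<Rightarrow> nat set \<Rightarrow> nat set" where
  "ins i S = insert i (skip i S)"

definition rank :: "nat set \<Rightarrow> nat \<Rightarrow> nat" where
  "rank A i = card {s \<in> A. s < i}"

lemma inj_skip_fun: "inj (\<lambda>s::nat. if s < i then s else Suc s)"
  by (rule injI) (auto split: if_splits)

lemma mem_skip: "x \<in> skip i S \<longleftrightarrow> (x < i \<and> x \<in> S) \<or> (i < x \<and> x - 1 \<in> S)"
proof
  assume "x \<in> skip i S"
  then obtain s where "s \<in> S" "x = (if s < i then s else Suc s)"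
    unfolding skip_def by blast
  then show "(x < i \<and> x \<in> S) \<or> (i < x \<and> x - 1 \<in> S)"
    by (cases "s < i") auto
next
  assume "(x < i \<and> x \<in> S) \<or> (i < x \<and> x - 1 \<in> S)"
  then show "x \<in> skip i S"
    unfolding skip_def
    by (elim disjE) (force intro: image_eqI[where x=x], force intro: image_eqI[where x="x - 1"])
qed

lemma mem_ins: "x \<in> ins i S \<longleftrightarrow> x = i \<or> (x < i \<and> x \<in> S) \<or> (i < x \<and> x - 1 \<in> S)"
  unfolding ins_def using mem_skip by auto

lemma notin_skip: "i \<notin> skip i S"
  by (simp add: mem_skip)

lemma skip_Compl: "skip i (- S) = - ins i S"
  by (auto simp: mem_skip mem_ins)

lemma Compl_skip: "- skip i S = ins i (- S)"
  by (auto simp: mem_skip mem_ins)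

lemma ins_minus: "ins i S - {i} = skip i S"
  using notin_skip unfolding ins_def by auto

lemma skip_inj: "skip i S = skip i T \<Longrightarrow> S = T"
  unfolding skip_def using inj_image_eq_iff[OF inj_skip_fun] by blast

lemma finite_skip: "finite (skip i S) \<longleftrightarrow> finite S"
  unfolding skip_def using finite_image_iff inj_on_subset[OF inj_skip_fun] by blast

lemma card_skip: "card (skip i S) = card S"
  unfolding skip_def by (rule card_image) (rule inj_on_subset[OF inj_skip_fun], simp)

lemma card_ins: "finite S \<Longrightarrow> card (ins i S) = Suc (card S)"
  unfolding ins_def by (simp add: notin_skip card_skip finite_skip)

lemma skip_subset: "S \<subseteq> {..<m} \<Longrightarrow> skip i S \<subseteq> {..<Suc m}"
  by (force simp: mem_skip)

lemma ins_subset: "i \<le> m \<Longrightarrow> S \<subseteq> {..<m} \<Longrightarrow> ins i S \<subseteq> {..<Suc m}"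
  unfolding ins_def using skip_subset by auto

lemma card_lessThan_Diff: "T \<subseteq> {..<K} \<Longrightarrow> card ({..<K} - T) = K - card T"
  by (simp add: card_Diff_subset finite_subset)

lemma nths_del:
  assumes "i < length xs"
  shows "nths (del i xs) S = nths xs (skip i S)"
proof -
  have "nths (take i xs) (skip i S) = nths (take i xs) S"
    by (rule nths_cong) (auto simp: mem_skip)
  moreover have "{j. j + Suc i \<in> skip i S} = {j. j + i \<in> S}"
    by (auto simp: mem_skip)
  ultimately show ?thesis
    using nths_split_at[OF assms, of "skip i S"] assms
    by (simp add: del_def nths_append min_def notin_skip)
qed

lemma nths_Cons_ins_0: "nths (x # xs) (ins 0 S) = x # nths xs S"
  by (simp add: nths_Cons mem_ins)

lemma nths_Cons_skip_0: "nths (x # xs) (skip 0 S) = nths xs S"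
  by (simp add: nths_Cons mem_skip)

lemma nths_Cons_Compl_ins_0: "nths (x # xs) (- ins 0 S) = nths xs (- S)"
  by (metis nths_Cons_skip_0 skip_Compl)

lemma nths_Cons_Compl_skip_0: "nths (x # xs) (- skip 0 S) = x # nths xs (- S)"
  by (metis nths_Cons_ins_0 Compl_skip)

lemma nths_lessThan_Diff_skip:
  "nths xs ({..<length xs} - skip i S - {i}) = nths xs (- ins i S)"
  by (rule nths_cong) (auto simp: ins_def)

lemma length_nths_take: "i \<le> length xs \<Longrightarrow> length (nths (take i xs) A) = rank A i"
  unfolding rank_def length_nths by (rule arg_cong[where f=card]) auto

lemma nths_split_rank:
  assumes "i \<in> A" "i < length xs"
  obtains P Q where "nths xs A = P @ xs ! i # Q" "nths xs (A - {i}) = P @ Q" "length P = rank A i"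
proof
  let ?P = "nths (take i xs) A" and ?Q = "nths (drop (Suc i) xs) {j. j + Suc i \<in> A}"
  show "nths xs A = ?P @ xs ! i # ?Q"
    using nths_split_at[OF assms(2)] assms(1) by simp
  have "nths (take i xs) (A - {i}) = ?P"
    by (rule nths_cong) auto
  moreover have "{j. j + Suc i \<in> A - {i}} = {j. j + Suc i \<in> A}"
    by auto
  ultimately show "nths xs (A - {i}) = ?P @ ?Q"
    using nths_split_at[OF assms(2), of "A - {i}"] by simp
  show "length ?P = rank A i"
    using assms(2) by (simp add: length_nths_take)
qed

lemma nth_nths_rank: "i \<in> A \<Longrightarrow> i < length xs \<Longrightarrow> nths xs A ! rank A i = xs ! i"
  by (metis nth_append_length nths_split_rank)

lemma del_rank_nths: "i \<in> A \<Longrightarrow> i < length xs \<Longrightarrow> del (rank A i) (nths xs A) = nths xs (A - {i})"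
  by (erule nths_split_rank, assumption) (simp add: del_def)

lemma nths_list_update_nonmem:
  assumes "j \<notin> A"
  shows "nths (xs[j := v]) A = nths xs A"
proof (cases "j < length xs")
  case True
  then show ?thesis
    using nths_split_at[of j "xs[j := v]" A] nths_split_at[OF True, of A] assms by simp
qed (simp add: list_update_beyond)

lemma nths_list_update_mem:
  assumes "j \<in> A" "j < length xs"
  shows "nths (xs[j := v]) A = (nths xs A)[rank A j := v]"
proof -
  obtain P Q where PQ: "nths xs A = P @ xs ! j # Q" "nths xs (A - {j}) = P @ Q" "length P = rank A j"
    using nths_split_rank[OF assms] .
  obtain P' Q' where P'Q': "nths (xs[j := v]) A = P' @ v # Q'"
    "nths (xs[j := v]) (A - {j}) = P' @ Q'" "length P' = rank A j"
    using nths_split_rank[of j A "xs[j := v]"] assms by auto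
  have "P' @ Q' = P @ Q"
    using PQ(2) P'Q'(2) by (simp add: nths_list_update_nonmem)
  then have "P' = P" "Q' = Q"
    using PQ(3) P'Q'(3) by (simp_all add: append_eq_append_conv)
  then show ?thesis
    using PQ(1,3) P'Q'(1) by (metis list_update_length)
qed

lemma rank_strict_mono: "finite A \<Longrightarrow> i \<in> A \<Longrightarrow> i < j \<Longrightarrow> rank A i < rank A j"
  unfolding rank_def by (rule psubset_card_mono) auto

lemma rank_less_card: "finite A \<Longrightarrow> i \<in> A \<Longrightarrow> rank A i < card A"
  unfolding rank_def by (rule psubset_card_mono) auto

lemma bij_betw_rank:
  assumes "finite A"
  shows "bij_betw (rank A) A {..<card A}"
proof -
  have inj: "inj_on (rank A) A"
    by (rule inj_onI) (metis assms less_irrefl nat_neq_iff rank_strict_mono)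
  moreover have "rank A ` A \<subseteq> {..<card A}"
    using rank_less_card[OF assms] by auto
  ultimately have "rank A ` A = {..<card A}"
    by (simp add: card_image card_subset_eq)
  then show ?thesis
    using inj by (simp add: bij_betw_def)
qed

lemma sum_lessThan_card_rank:
  fixes g :: "nat \<Rightarrow> 'a::comm_monoid_add"
  shows "finite A \<Longrightarrow> (\<Sum>a<card A. g a) = (\<Sum>i\<in>A. g (rank A i))"
  by (rule sum.reindex_bij_betw[OF bij_betw_rank, symmetric])

lemma sum_ordered_pairs_lessThan_card_rank:
  fixes g :: "nat \<Rightarrow> nat \<Rightarrow> 'a::comm_monoid_add"
  assumes "finite A"
  shows "(\<Sum>b<card A. \<Sum>a<b. g a b) = (\<Sum>j\<in>A. \<Sum>i\<in>{s\<in>A. s < j}. g (rank A i) (rank A j))"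
proof -
  have "rank {s\<in>A. s < j} i = rank A i" if "i < j" for i j
    unfolding rank_def using that by (intro arg_cong[where f=card]) auto
  then have "(\<Sum>a<rank A j. g a (rank A j)) = (\<Sum>i\<in>{s\<in>A. s < j}. g (rank A i) (rank A j))" for j
    unfolding rank_def[of A j] using assms by (simp add: sum_lessThan_card_rank)
  then show ?thesis
    using assms by (simp add: sum_lessThan_card_rank)
qed

lemma rank_ins: "rank (ins i S) i = rank S i"
  unfolding rank_def by (rule arg_cong[where f=card]) (auto simp: mem_ins)

lemma rank_Compl_skip:
  assumes "i < n"
  shows "rank ({..<n} - skip i S) i + rank S i = i"
proof -
  have "{s\<in>{..<n} - skip i S. s < i} = {x\<in>{..<i}. x \<notin> S}" "{s\<in>S. s < i} = {x\<in>{..<i}. x \<in> S}"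
    using assms by (auto simp: mem_skip)
  moreover have "card {x\<in>{..<i}. x \<notin> S} + card {x\<in>{..<i}. x \<in> S} =
      card ({x\<in>{..<i}. x \<notin> S} \<union> {x\<in>{..<i}. x \<in> S})"
    by (rule card_Un_disjoint[symmetric]) auto
  moreover have "{x\<in>{..<i}. x \<notin> S} \<union> {x\<in>{..<i}. x \<in> S} = {..<i}"
    by auto
  ultimately show ?thesis
    unfolding rank_def by simp
qed

section \<open>Reindexing sums over subsets\<close>

lemma skip_surj:
  assumes "A \<subseteq> {..<Suc m}" "i \<le> m"
  obtains S where "S \<subseteq> {..<m}" "skip i S = A - {i}"
proof
  let ?S = "(\<lambda>x. if x < i then x else x - 1) ` (A - {i})"
  show "?S \<subseteq> {..<m}"
    using assms by auto
  have "skip i ?S = (\<lambda>x. x) ` (A - {i})"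
    unfolding skip_def image_image by (rule image_cong) auto
  then show "skip i ?S = A - {i}"
    by simp
qed

lemma bij_betw_ins: "i \<le> m \<Longrightarrow> bij_betw (ins i) (Pow {..<m}) {S \<in> Pow {..<Suc m}. i \<in> S}"
proof (rule bij_betw_imageI)
  show "inj_on (ins i) (Pow {..<m})"
    by (rule inj_onI) (metis ins_minus skip_inj)
  assume "i \<le> m"
  show "ins i ` Pow {..<m} = {S \<in> Pow {..<Suc m}. i \<in> S}"
  proof (intro set_eqI iffI)
    fix A
    assume "A \<in> {S \<in> Pow {..<Suc m}. i \<in> S}"
    moreover from this obtain S where "S \<subseteq> {..<m}" "skip i S = A - {i}"
      using skip_surj \<open>i \<le> m\<close> by blast
    ultimately have "ins i S = A" "S \<in> Pow {..<m}"
      unfolding ins_def by auto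
    then show "A \<in> ins i ` Pow {..<m}"
      by blast
  qed (use ins_subset \<open>i \<le> m\<close> in \<open>auto simp: ins_def\<close>)
qed

lemma bij_betw_skip: "i \<le> m \<Longrightarrow> bij_betw (skip i) (Pow {..<m}) {S \<in> Pow {..<Suc m}. i \<notin> S}"
proof (rule bij_betw_imageI)
  show "inj_on (skip i) (Pow {..<m})"
    by (rule inj_onI) (rule skip_inj)
  assume "i \<le> m"
  show "skip i ` Pow {..<m} = {S \<in> Pow {..<Suc m}. i \<notin> S}"
  proof (intro set_eqI iffI)
    fix A
    assume "A \<in> {S \<in> Pow {..<Suc m}. i \<notin> S}"
    moreover from this obtain S where "S \<subseteq> {..<m}" "skip i S = A - {i}"
      using skip_surj \<open>i \<le> m\<close> by blast
    ultimately have "skip i S = A" "S \<in> Pow {..<m}"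
      by auto
    then show "A \<in> skip i ` Pow {..<m}"
      by blast
  qed (use skip_subset notin_skip in auto)
qed

lemma sum_Pow_ins:
  fixes F :: "nat set \<Rightarrow> 'a::comm_monoid_add"
  assumes "i \<le> m"
  shows "(\<Sum>S\<in>Pow {..<m}. F (ins i S)) = (\<Sum>S\<in>Pow {..<Suc m}. if i \<in> S then F S else 0)"
  unfolding sum.reindex_bij_betw[OF bij_betw_ins[OF assms]] by (rule sum.inter_filter) simp

lemma sum_Pow_skip:
  fixes F :: "nat set \<Rightarrow> 'a::comm_monoid_add"
  assumes "i \<le> m"
  shows "(\<Sum>S\<in>Pow {..<m}. F (skip i S)) = (\<Sum>S\<in>Pow {..<Suc m}. if i \<notin> S then F S else 0)"
  unfolding sum.reindex_bij_betw[OF bij_betw_skip[OF assms]] by (rule sum.inter_filter) simp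

lemma sum_Pow_Suc_if_mem:
  fixes F :: "nat set \<Rightarrow> nat set \<Rightarrow> 'a::comm_monoid_add"
  assumes "i \<le> m"
  shows "(\<Sum>S\<in>Pow {..<Suc m}. \<Sum>T\<in>B. if i \<in> S \<and> P S T then F S T else 0) =
    (\<Sum>S\<in>Pow {..<m}. \<Sum>T\<in>B. if P (ins i S) T then F (ins i S) T else 0)"
  by (subst sum_Pow_ins[OF assms]) (auto intro!: sum.cong)

lemma sum_Pow_Suc_if_nonmem:
  fixes F :: "nat set \<Rightarrow> nat set \<Rightarrow> 'a::comm_monoid_add"
  assumes "i \<le> m"
  shows "(\<Sum>S\<in>Pow {..<Suc m}. \<Sum>T\<in>B. if i \<notin> S \<and> P S T then F S T else 0) =
    (\<Sum>S\<in>Pow {..<m}. \<Sum>T\<in>B. if P (skip i S) T then F (skip i S) T else 0)"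
  by (subst sum_Pow_skip[OF assms]) (auto intro!: sum.cong)

lemma sum_Pow_sum_mem:
  fixes \<Phi> :: "nat \<Rightarrow> nat set \<Rightarrow> 'a::comm_monoid_add"
  shows "(\<Sum>T\<in>Pow {..<K}. \<Sum>\<mu>\<in>T. \<Phi> \<mu> T) = (\<Sum>\<mu><K. \<Sum>T\<in>Pow {..<K - 1}. \<Phi> \<mu> (ins \<mu> T))"
proof -
  have "(\<Sum>T\<in>Pow {..<K}. \<Sum>\<mu>\<in>T. \<Phi> \<mu> T) = (\<Sum>T\<in>Pow {..<K}. \<Sum>\<mu><K. if \<mu> \<in> T then \<Phi> \<mu> T else 0)"
    by (rule sum.cong[OF refl]) (simp add: sum.inter_restrict[symmetric] Int_absorb1)
  also have "\<dots> = (\<Sum>\<mu><K. \<Sum>T\<in>Pow {..<Suc (K - 1)}. if \<mu> \<in> T then \<Phi> \<mu> T else 0)"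
    by (subst sum.swap) (intro sum.cong refl, simp)
  also have "\<dots> = (\<Sum>\<mu><K. \<Sum>T\<in>Pow {..<K - 1}. \<Phi> \<mu> (ins \<mu> T))"
    by (intro sum.cong refl sum_Pow_ins[symmetric]) auto
  finally show ?thesis .
qed

lemma sum_Pow_sum_nonmem:
  fixes \<Phi> :: "nat \<Rightarrow> nat set \<Rightarrow> 'a::comm_monoid_add"
  shows "(\<Sum>T\<in>Pow {..<K}. \<Sum>\<mu>\<in>{..<K} - T. \<Phi> \<mu> T) = (\<Sum>\<mu><K. \<Sum>T\<in>Pow {..<K - 1}. \<Phi> \<mu> (skip \<mu> T))"
proof -
  have "(\<Sum>T\<in>Pow {..<K}. \<Sum>\<mu>\<in>{..<K} - T. \<Phi> \<mu> T) = (\<Sum>T\<in>Pow {..<K}. \<Sum>\<mu><K. if \<mu> \<notin> T then \<Phi> \<mu> T else 0)"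
    by (rule sum.cong[OF refl]) (simp add: sum.inter_filter[symmetric] set_diff_eq)
  also have "\<dots> = (\<Sum>\<mu><K. \<Sum>T\<in>Pow {..<Suc (K - 1)}. if \<mu> \<notin> T then \<Phi> \<mu> T else 0)"
    by (subst sum.swap) (intro sum.cong refl, simp)
  also have "\<dots> = (\<Sum>\<mu><K. \<Sum>T\<in>Pow {..<K - 1}. \<Phi> \<mu> (skip \<mu> T))"
    by (intro sum.cong refl sum_Pow_skip[symmetric]) auto
  finally show ?thesis .
qed

lemma sum_ordered_pairs_subset:
  fixes \<Phi> :: "nat \<Rightarrow> nat \<Rightarrow> 'a::comm_monoid_add"
  assumes "A \<subseteq> {..<n}"
  shows "(\<Sum>j\<in>A. \<Sum>i\<in>{s\<in>A. s < j}. \<Phi> i j) = (\<Sum>j<n. \<Sum>i<j. if i \<in> A \<and> j \<in> A then \<Phi> i j else 0)"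
proof -
  have "(\<Sum>j\<in>A. \<Sum>i\<in>{s\<in>A. s < j}. \<Phi> i j) = (\<Sum>j\<in>A. \<Sum>i<j. if i \<in> A then \<Phi> i j else 0)"
    by (rule sum.cong[OF refl]) (simp add: sum.inter_restrict[symmetric] Int_def conj_commute)
  also have "\<dots> = (\<Sum>j<n. if j \<in> A then \<Sum>i<j. if i \<in> A then \<Phi> i j else 0 else 0)"
    using assms by (simp add: sum.inter_restrict[symmetric] Int_absorb1)
  also have "\<dots> = (\<Sum>j<n. \<Sum>i<j. if i \<in> A \<and> j \<in> A then \<Phi> i j else 0)"
    by (rule sum.cong[OF refl]) auto
  finally show ?thesis .
qed

lemma sum_Pow_sum_pairs_mem:
  fixes \<Phi> :: "nat \<Rightarrow> nat \<Rightarrow> nat set \<Rightarrow> 'a::comm_monoid_add"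
  shows "(\<Sum>S\<in>Pow {..<n}. \<Sum>j\<in>S. \<Sum>i\<in>{s\<in>S. s < j}. \<Phi> i j S) =
    (\<Sum>j<n. \<Sum>i<j. \<Sum>S\<in>Pow {..<n - 1}. if j \<in> ins i S then \<Phi> i j (ins i S) else 0)"
proof -
  have "(\<Sum>S\<in>Pow {..<n}. \<Sum>j\<in>S. \<Sum>i\<in>{s\<in>S. s < j}. \<Phi> i j S) =
      (\<Sum>S\<in>Pow {..<n}. \<Sum>j<n. \<Sum>i<j. if i \<in> S \<and> j \<in> S then \<Phi> i j S else 0)"
    by (rule sum.cong[OF refl]) (rule sum_ordered_pairs_subset, auto)
  also have "\<dots> = (\<Sum>j<n. \<Sum>i<j. \<Sum>S\<in>Pow {..<n}. if i \<in> S \<and> j \<in> S then \<Phi> i j S else 0)"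
    by (simp add: sum.swap[of _ "Pow {..<n}"])
  also have "\<dots> = (\<Sum>j<n. \<Sum>i<j. \<Sum>S\<in>Pow {..<n - 1}. if j \<in> ins i S then \<Phi> i j (ins i S) else 0)"
  proof (rule sum.cong[OF refl], rule sum.cong[OF refl])
    fix j i
    assume "j \<in> {..<n}" "i \<in> {..<j}"
    then show "(\<Sum>S\<in>Pow {..<n}. if i \<in> S \<and> j \<in> S then \<Phi> i j S else 0) =
        (\<Sum>S\<in>Pow {..<n - 1}. if j \<in> ins i S then \<Phi> i j (ins i S) else 0)"
      using sum_Pow_ins[of i "n - 1" "\<lambda>S. if j \<in> S then \<Phi> i j S else 0"] by (simp add: if_if_eq_conj)
  qed
  finally show ?thesis .
qed

lemma sum_Pow_sum_pairs_nonmem: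
  fixes \<Phi> :: "nat \<Rightarrow> nat \<Rightarrow> nat set \<Rightarrow> 'a::comm_monoid_add"
  shows "(\<Sum>S\<in>Pow {..<n}. \<Sum>j\<in>{..<n} - S. \<Sum>i\<in>{s\<in>{..<n} - S. s < j}. \<Phi> i j S) =
    (\<Sum>j<n. \<Sum>i<j. \<Sum>S\<in>Pow {..<n - 1}. if j \<notin> skip i S then \<Phi> i j (skip i S) else 0)"
proof -
  have "(\<Sum>S\<in>Pow {..<n}. \<Sum>j\<in>{..<n} - S. \<Sum>i\<in>{s\<in>{..<n} - S. s < j}. \<Phi> i j S) =
      (\<Sum>S\<in>Pow {..<n}. \<Sum>j<n. \<Sum>i<j. if i \<notin> S \<and> j \<notin> S then \<Phi> i j S else 0)"
    by (rule sum.cong[OF refl]) (subst sum_ordered_pairs_subset[of _ n], auto intro!: sum.cong)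
  also have "\<dots> = (\<Sum>j<n. \<Sum>i<j. \<Sum>S\<in>Pow {..<n}. if i \<notin> S \<and> j \<notin> S then \<Phi> i j S else 0)"
    by (simp add: sum.swap[of _ "Pow {..<n}"])
  also have "\<dots> = (\<Sum>j<n. \<Sum>i<j. \<Sum>S\<in>Pow {..<n - 1}. if j \<notin> skip i S then \<Phi> i j (skip i S) else 0)"
  proof (rule sum.cong[OF refl], rule sum.cong[OF refl])
    fix j i
    assume "j \<in> {..<n}" "i \<in> {..<j}"
    then show "(\<Sum>S\<in>Pow {..<n}. if i \<notin> S \<and> j \<notin> S then \<Phi> i j S else 0) =
        (\<Sum>S\<in>Pow {..<n - 1}. if j \<notin> skip i S then \<Phi> i j (skip i S) else 0)"
      using sum_Pow_skip[of i "n - 1" "\<lambda>S. if j \<notin> S then \<Phi> i j S else 0"] by (simp add: if_if_eq_conj)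
  qed
  finally show ?thesis .
qed

lemma sum_Pow_graded:
  fixes F :: "nat \<Rightarrow> nat set \<Rightarrow> nat set \<Rightarrow> 'a::comm_monoid_add"
  assumes "finite A" "finite B"
  shows "(\<Sum>S\<in>Pow A. \<Sum>T\<in>Pow B. if card S + 2 * card T = p then F (card T) S T else 0) =
    (\<Sum>i\<in>{i. i \<le> card B \<and> 2 * i \<le> p \<and> p \<le> card A + 2 * i}.
      \<Sum>S\<in>{S. S \<subseteq> A \<and> card S = p - 2 * i}. \<Sum>T\<in>{T. T \<subseteq> B \<and> card T = i}. F i S T)"
    (is "?lhs = (\<Sum>i\<in>?I. \<Sum>S\<in>?S i. \<Sum>T\<in>?T i. F i S T)")
proof -
  let ?G = "\<lambda>x. F (card (snd x)) (fst x) (snd x)"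
  have fin: "finite (?S i)" "finite (?T i)" for i
    using assms by (auto intro: rev_finite_subset[of "Pow _"])
  have "?lhs = (\<Sum>x\<in>Pow A \<times> Pow B. if card (fst x) + 2 * card (snd x) = p then ?G x else 0)"
    by (simp add: sum.cartesian_product case_prod_beta)
  also have "\<dots> = sum ?G {x \<in> Pow A \<times> Pow B. card (fst x) + 2 * card (snd x) = p}"
    using assms by (simp add: sum.inter_filter)
  also have "{x \<in> Pow A \<times> Pow B. card (fst x) + 2 * card (snd x) = p} = (\<Union>i\<in>?I. ?S i \<times> ?T i)"
    using assms by (auto simp: card_mono)
  also have "sum ?G (\<Union>i\<in>?I. ?S i \<times> ?T i) = (\<Sum>i\<in>?I. sum ?G (?S i \<times> ?T i))"
    by (rule sum.UNION_disjoint) (use fin in auto)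
  also have "\<dots> = (\<Sum>i\<in>?I. \<Sum>S\<in>?S i. \<Sum>T\<in>?T i. F i S T)"
    by (rule sum.cong[OF refl], subst sum.cartesian_product) (auto simp: case_prod_beta intro: sum.cong)
  finally show ?thesis .
qed

section \<open>Shuffles\<close>

lemma shufflesD:
  assumes "\<sigma> \<in> shuffles a b"
  shows "\<sigma> permutes {..<a + b}" "\<And>x y. x < y \<Longrightarrow> y < a \<Longrightarrow> \<sigma> x < \<sigma> y"
    "\<And>x y. a \<le> x \<Longrightarrow> x < y \<Longrightarrow> y < a + b \<Longrightarrow> \<sigma> x < \<sigma> y"
  using assms unfolding shuffles_def by auto

lemma shuffle_image_back:
  assumes "\<sigma> \<in> shuffles a b"
  shows "\<sigma> ` {a..<a + b} = {..<a + b} - \<sigma> ` {..<a}"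
proof -
  note perm = shufflesD(1)[OF assms]
  have "{a..<a + b} = {..<a + b} - {..<a}"
    by (rule lessThan_minus_lessThan[symmetric])
  moreover have "\<sigma> ` ({..<a + b} - {..<a}) = \<sigma> ` {..<a + b} - \<sigma> ` {..<a}"
    by (rule inj_on_image_set_diff[OF permutes_inj_on[OF perm, where A=UNIV]]) auto
  ultimately show ?thesis
    using permutes_image[OF perm] by simp
qed

lemma shuffle_image_front_subset: "\<sigma> \<in> shuffles a b \<Longrightarrow> \<sigma> ` {..<a} \<subseteq> {..<a + b}"
  using permutes_image[OF shufflesD(1)] by fastforce

lemma card_shuffle_image_front: "\<sigma> \<in> shuffles a b \<Longrightarrow> card (\<sigma> ` {..<a}) = a"
  by (metis card_image card_lessThan permutes_inj_on shufflesD(1))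

lemma map_shuffle_front_eq_nths:
  assumes "\<sigma> \<in> shuffles a b" "length xs = a + b"
  shows "map (\<lambda>l. xs ! \<sigma> l) [0..<a] = nths xs (\<sigma> ` {..<a})"
proof -
  have "map (\<lambda>l. xs ! \<sigma> l) [0..<a] = map ((!) xs) (map \<sigma> [0..<a])"
    by simp
  also have "\<dots> = nths xs (\<sigma> ` {..<a})"
    using shuffle_image_front_subset[OF assms(1)] assms(2) shufflesD(2)[OF assms(1)]
    by (subst map_nth_eq_nths) (auto simp: sorted_wrt_iff_nth_less atLeast0LessThan)
  finally show ?thesis .
qed

lemma map_shuffle_back_eq_nths:
  assumes "\<sigma> \<in> shuffles a b" "length xs = a + b"
  shows "map (\<lambda>l. xs ! \<sigma> l) [a..<a + b] = nths xs (- \<sigma> ` {..<a})"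
proof -
  have "map (\<lambda>l. xs ! \<sigma> l) [a..<a + b] = map ((!) xs) (map \<sigma> [a..<a + b])"
    by simp
  also have "\<dots> = nths xs ({..<a + b} - \<sigma> ` {..<a})"
    using shuffle_image_back[OF assms(1)] assms(2) shufflesD(3)[OF assms(1)]
    by (subst map_nth_eq_nths) (auto simp: sorted_wrt_iff_nth_less)
  finally show ?thesis
    using assms(2) by (simp add: nths_Compl)
qed

lemma shuffle_eqI:
  assumes "\<sigma> \<in> shuffles a b" "\<sigma>' \<in> shuffles a b" "\<sigma> ` {..<a} = \<sigma>' ` {..<a}"
  shows "\<sigma> = \<sigma>'"
proof
  fix x
  have sorted: "sorted_wrt (<) (map \<tau> [0..<a])" "sorted_wrt (<) (map \<tau> [a..<a + b])"
    if "\<tau> \<in> shuffles a b" for \<tau>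
    using shufflesD(2,3)[OF that] by (auto simp: sorted_wrt_iff_nth_less)
  have front_eq: "map \<sigma> [0..<a] = map \<sigma>' [0..<a]"
    by (rule sorted_distinct_set_unique)
      (use sorted[OF assms(1)] sorted[OF assms(2)] assms(3)
        in \<open>auto simp: strict_sorted_iff atLeast0LessThan\<close>)
  have back_eq: "map \<sigma> [a..<a + b] = map \<sigma>' [a..<a + b]"
    by (rule sorted_distinct_set_unique)
      (use sorted[OF assms(1)] sorted[OF assms(2)] assms(3) shuffle_image_back[OF assms(1)]
        shuffle_image_back[OF assms(2)] in \<open>auto simp: strict_sorted_iff\<close>)
  consider "x < a" | "a \<le> x" "x < a + b" | "a + b \<le> x"
    by linarith
  then show "\<sigma> x = \<sigma>' x"
  proof cases
    case 1
    then show ?thesis using arg_cong[OF front_eq, of "\<lambda>l. l ! x"] by simp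
  next
    case 2
    then show ?thesis using arg_cong[OF back_eq, of "\<lambda>l. l ! (x - a)"] by simp
  next
    case 3
    then show ?thesis
      using shufflesD(1)[OF assms(1)] shufflesD(1)[OF assms(2)] by (simp add: permutes_def)
  qed
qed

lemma id_in_shuffles: "id \<in> shuffles a b"
  unfolding shuffles_def using permutes_id by simp

lemma exists_gap:
  assumes "S \<subseteq> {..<n}" "card S = a" "S \<noteq> {..<a}"
  obtains t where "t \<notin> S" "Suc t \<in> S" "Suc t < n"
proof -
  have fin: "finite S"
    using assms(1) finite_subset by blast
  obtain u where u: "u < a" "u \<notin> S"
    using assms(2,3) fin by (metis card_lessThan card_subset_eq finite_lessThan subsetI lessThan_iff)
  obtain s where s: "s \<in> S" "a \<le> s"
    using assms(2,3) fin
    by (metis card_lessThan card_subset_eq finite_lessThan not_le subsetI lessThan_iff)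
  define t where "t = Max {t. u \<le> t \<and> t < s \<and> t \<notin> S}"
  have "u \<in> {t. u \<le> t \<and> t < s \<and> t \<notin> S}"
    using u s by auto
  then have "t \<in> {t. u \<le> t \<and> t < s \<and> t \<notin> S}"
    unfolding t_def by (intro Max_in) (auto simp: finite_nat_set_iff_bounded)
  moreover have "Suc t \<in> S"
  proof (rule ccontr)
    assume "Suc t \<notin> S"
    with \<open>t \<in> _\<close> s(1) have "Suc t \<in> {t. u \<le> t \<and> t < s \<and> t \<notin> S}"
      by (auto simp: less_Suc_eq intro: Suc_lessI)
    then show False
      unfolding t_def by (metis (no_types, lifting) Max_ge finite_nat_set_iff_bounded mem_Collect_eq
          not_less_eq_eq order_refl)
  qed
  ultimately show ?thesis
    using that assms(1) s(1) by auto
qed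

lemma transpose_Suc_strict_mono:
  "u < v \<Longrightarrow> \<not> (u = t \<and> v = Suc t) \<Longrightarrow> transpose t (Suc t) u < transpose t (Suc t) v"
  by (auto simp: transpose_def)

lemma shuffle_transpose_gap:
  assumes \<sigma>: "\<sigma> \<in> shuffles a b" and t: "t \<notin> \<sigma> ` {..<a}" "Suc t \<in> \<sigma> ` {..<a}" "Suc t < a + b"
  shows "transpose t (Suc t) \<circ> \<sigma> \<in> shuffles a b"
    and "(transpose t (Suc t) \<circ> \<sigma>) ` {..<a} = insert t (\<sigma> ` {..<a} - {Suc t})"
proof -
  note D = shufflesD[OF \<sigma>]
  have "transpose t (Suc t) permutes {..<a + b}"
    using t(3) by (intro permutes_swap_id) auto
  then have "transpose t (Suc t) \<circ> \<sigma> permutes {..<a + b}"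
    by (rule permutes_compose[OF D(1)])
  moreover have "\<sigma> y \<noteq> Suc t" if "a \<le> y" "y < a + b" for y
    using that t(2) shuffle_image_back[OF \<sigma>] by (metis Diff_iff atLeastLessThan_iff imageI)
  ultimately show "transpose t (Suc t) \<circ> \<sigma> \<in> shuffles a b"
    unfolding shuffles_def using D(2,3) t(1) by (auto intro!: transpose_Suc_strict_mono)
  show "(transpose t (Suc t) \<circ> \<sigma>) ` {..<a} = insert t (\<sigma> ` {..<a} - {Suc t})"
  proof -
    have "transpose t (Suc t) ` S = insert t (S - {Suc t})" if "t \<notin> S" "Suc t \<in> S" for S
      using that by (auto simp: transpose_def image_iff intro: bexI[of _ "Suc t"])
    then show ?thesis
      using t(1,2) by (metis image_comp)
  qed
qed

lemma sign_shuffle: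
  assumes "\<sigma> \<in> shuffles a b"
  shows "sign \<sigma> = (-1) ^ (\<Sum>(\<sigma> ` {..<a}) + \<Sum>{..<a})"
  using assms
proof (induction "\<Sum>(\<sigma> ` {..<a})" arbitrary: \<sigma> rule: less_induct)
  case less
  show ?case
  proof (cases "\<sigma> ` {..<a} = {..<a}")
    case True
    then show ?thesis
      using shuffle_eqI[OF less.prems id_in_shuffles] by simp
  next
    case False
    then obtain t where t: "t \<notin> \<sigma> ` {..<a}" "Suc t \<in> \<sigma> ` {..<a}" "Suc t < a + b"
      using exists_gap shuffle_image_front_subset card_shuffle_image_front less.prems by metis
    txt \<open>Composing with the transposition of t and t+1 lowers \<open>\<Sum>(\<sigma> ` {..<a})\<close> by one and flips
      the sign.\<close>
    define \<sigma>' where "\<sigma>' = transpose t (Suc t) \<circ> \<sigma>"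
    have \<sigma>': "\<sigma>' \<in> shuffles a b" "\<sigma>' ` {..<a} = insert t (\<sigma> ` {..<a} - {Suc t})"
      unfolding \<sigma>'_def using shuffle_transpose_gap[OF less.prems t] by auto
    have sum: "\<Sum>(\<sigma>' ` {..<a}) + 1 = \<Sum>(\<sigma> ` {..<a})"
      using t(1,2) by (simp add: \<sigma>'(2) sum.remove[of _ "Suc t"])
    have "permutation \<sigma>"
      using shufflesD(1)[OF less.prems] permutation_permutes by blast
    then have "sign \<sigma>' = - sign \<sigma>"
      unfolding \<sigma>'_def by (simp add: sign_compose permutation_swap_id sign_swap_id)
    moreover have "sign \<sigma>' = (-1) ^ (\<Sum>(\<sigma>' ` {..<a}) + \<Sum>{..<a})"
      using less.hyps[OF _ \<sigma>'(1)] sum by simp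
    ultimately show ?thesis
      by (simp flip: sum)
  qed
qed

lemma shuffle_with_image:
  assumes "S \<subseteq> {..<a + b}" "card S = a"
  obtains \<sigma> where "\<sigma> \<in> shuffles a b" "\<sigma> ` {..<a} = S"
proof -
  define L1 where "L1 = sorted_list_of_set S"
  define L2 where "L2 = sorted_list_of_set ({..<a + b} - S)"
  have finS: "finite S"
    using assms(1) finite_subset by blast
  have L1: "sorted_wrt (<) L1" "set L1 = S" "length L1 = a"
    unfolding L1_def using finS assms(2) by simp_all
  have L2: "sorted_wrt (<) L2" "set L2 = {..<a + b} - S" "length L2 = b"
    unfolding L2_def using finS assms by (simp_all add: card_Diff_subset)
  define L where "L = L1 @ L2"
  have "distinct L" "set L = {..<a + b}" "length L = a + b"
    unfolding L_def using L1 L2 assms(1) by (auto simp: strict_sorted_iff)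
  then have "bij_betw ((!) L) {..<a + b} {..<a + b}"
    by (metis bij_betw_nth)
  define \<sigma> where "\<sigma> x = (if x < a + b then L ! x else x)" for x
  have perm: "\<sigma> permutes {..<a + b}"
    unfolding \<sigma>_def using \<open>bij_betw _ _ _\<close>
    by (intro bij_imp_permutes) (auto simp: bij_betw_def inj_on_def image_def)
  have \<sigma>_front: "\<sigma> x = L1 ! x" if "x < a" for x
    using that L1(3) by (simp add: \<sigma>_def L_def nth_append)
  have \<sigma>_back: "\<sigma> x = L2 ! (x - a)" if "a \<le> x" "x < a + b" for x
    using that L1(3) by (simp add: \<sigma>_def L_def nth_append)
  show ?thesis
  proof
    show "\<sigma> \<in> shuffles a b"
      unfolding shuffles_def using perm L1(1,3) L2(1,3)
      by (auto simp: \<sigma>_front \<sigma>_back sorted_wrt_iff_nth_less)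
    have "\<sigma> ` {..<a} = (!) L1 ` {..<a}"
      using \<sigma>_front by auto
    also have "\<dots> = set L1"
      using L1(3) by (auto simp: set_conv_nth)
    finally show "\<sigma> ` {..<a} = S"
      using L1(2) by simp
  qed
qed

lemma bij_betw_shuffle_image:
  "bij_betw (\<lambda>\<sigma>. \<sigma> ` {..<a}) (shuffles a b) {S. S \<subseteq> {..<a + b} \<and> card S = a}"
  unfolding bij_betw_def
proof
  show "inj_on (\<lambda>\<sigma>. \<sigma> ` {..<a}) (shuffles a b)"
    by (rule inj_onI) (rule shuffle_eqI)
  show "(\<lambda>\<sigma>. \<sigma> ` {..<a}) ` shuffles a b = {S. S \<subseteq> {..<a + b} \<and> card S = a}"
  proof (intro set_eqI iffI)
    fix S
    assume "S \<in> {S. S \<subseteq> {..<a + b} \<and> card S = a}"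
    then obtain \<sigma> where "\<sigma> \<in> shuffles a b" "\<sigma> ` {..<a} = S"
      using shuffle_with_image by blast
    then show "S \<in> (\<lambda>\<sigma>. \<sigma> ` {..<a}) ` shuffles a b"
      by blast
  qed (use shuffle_image_front_subset card_shuffle_image_front in blast)
qed

section \<open>The product as a sum over pairs of index sets\<close>

text \<open>The parity of \<open>\<Sum>S + \<Sum>{..<card S}\<close> is the number of inversions of the shuffle moving the
  positions S to the front (\<open>sign_shuffle\<close>).\<close>

definition subset_sign :: "nat set \<Rightarrow> 'r::comm_ring_1" where
  "subset_sign S = (-1) ^ (\<Sum>S + \<Sum>{..<card S})"

lemma minus_one_power_eq: "even (x + y) \<Longrightarrow> ((-1::'r::comm_ring_1) ^ x) = (-1) ^ y"
  by (simp add: minus_one_power_iff)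

lemma card_split_at:
  fixes S :: "nat set"
  assumes "finite S"
  shows "card S = card {s\<in>S. s < i} + card {s\<in>S. i \<le> s}"
  using assms by (subst card_Un_disjoint[symmetric]) (auto intro: arg_cong[where f=card])

lemma sum_skip:
  assumes "finite S"
  shows "\<Sum>(skip i S) = \<Sum>S + card {s\<in>S. i \<le> s}"
proof -
  have "\<Sum>(skip i S) = (\<Sum>s\<in>S. s + (if i \<le> s then 1 else 0))"
    unfolding skip_def by (subst sum.reindex[OF inj_on_subset[OF inj_skip_fun]]) (auto intro: sum.cong)
  also have "\<dots> = \<Sum>S + card {s\<in>S. i \<le> s}"
    using assms by (simp add: sum.distrib sum.If_cases Int_def conj_commute)
  finally show ?thesis .
qed

lemma subset_sign_skip:
  "finite S \<Longrightarrow> subset_sign (skip i S) = ((-1::'r::comm_ring_1) ^ card {s\<in>S. i \<le> s}) * subset_sign S"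
  unfolding subset_sign_def card_skip by (simp add: sum_skip power_add)

lemma subset_sign_ins:
  assumes "finite S"
  shows "subset_sign (ins i S) * (-1) ^ rank (ins i S) i = ((-1::'r::comm_ring_1) ^ i) * subset_sign S"
proof -
  have "\<Sum>(ins i S) = i + \<Sum>S + card {s\<in>S. i \<le> s}"
    unfolding ins_def using assms by (simp add: notin_skip finite_skip sum_skip)
  then have "subset_sign (ins i S) * (-1) ^ rank (ins i S) i =
      ((-1::'r) ^ (i + \<Sum>S + card {s\<in>S. i \<le> s} + (\<Sum>{..<card S} + card S) + card {s\<in>S. s < i}))"
    unfolding rank_ins unfolding subset_sign_def rank_def card_ins[OF assms] by (simp add: power_add)
  also have "\<dots> = (-1) ^ (i + (\<Sum>S + \<Sum>{..<card S}))"
    by (rule minus_one_power_eq) (use card_split_at[OF assms, of i] in presburger)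
  finally show ?thesis
    unfolding subset_sign_def by (simp add: power_add)
qed

lemma subset_sign_ins_0: "finite S \<Longrightarrow> subset_sign (ins 0 S) = subset_sign S"
  using subset_sign_ins[of S 0] by (simp add: rank_def)

lemma subset_sign_skip_0: "finite S \<Longrightarrow> subset_sign (skip 0 S) = (-1) ^ card S * subset_sign S"
  by (simp add: subset_sign_skip)

lemma subset_sign_skip_Compl:
  assumes "finite S" "card S + 2 * t = p" "i < n"
  shows "(-1) ^ p * (subset_sign (skip i S) * (-1) ^ rank ({..<n} - skip i S) i)
    = ((-1::'r::comm_ring_1) ^ i) * subset_sign S"
proof -
  have "(-1) ^ p * (subset_sign (skip i S) * (-1) ^ rank ({..<n} - skip i S) i) =
      ((-1::'r) ^ (p + card {s\<in>S. i \<le> s} + rank ({..<n} - skip i S) i)) * subset_sign S"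
    unfolding subset_sign_skip[OF assms(1)] by (simp add: power_add)
  also have "((-1::'r) ^ (p + card {s\<in>S. i \<le> s} + rank ({..<n} - skip i S) i)) = (-1) ^ i"
    by (rule minus_one_power_eq)
      (use card_split_at[OF assms(1), of i] rank_Compl_skip[OF assms(3), of S] assms(2)
        in \<open>unfold rank_def, presburger\<close>)
  finally show ?thesis .
qed

lemma sign_shuffle_eq_subset_sign: "\<sigma> \<in> shuffles a b \<Longrightarrow> of_int (sign \<sigma>) = subset_sign (\<sigma> ` {..<a})"
  by (simp add: sign_shuffle subset_sign_def card_shuffle_image_front)

definition subset_prod ::
  "nat \<Rightarrow> (nat \<Rightarrow> 'e list \<Rightarrow> 'a list \<Rightarrow> 'r::comm_ring_1) \<Rightarrow> (nat \<Rightarrow> 'e list \<Rightarrow> 'a list \<Rightarrow> 'r)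
    \<Rightarrow> 'e list \<Rightarrow> 'a list \<Rightarrow> 'r"
where
  "subset_prod p W H es fs = (\<Sum>S\<in>Pow {..<length es}. \<Sum>T\<in>Pow {..<length fs}.
     if card S + 2 * card T = p
     then subset_sign S * W (card T) (nths es S) (nths fs T)
       * H (length fs - card T) (nths es (- S)) (nths fs (- T))
     else 0)"

lemma sum_shuffles_eq_sum_subsets:
  fixes G :: "nat set \<Rightarrow> 'a::comm_monoid_add"
  shows "(\<Sum>\<sigma>\<in>shuffles a b. G (\<sigma> ` {..<a})) = (\<Sum>S\<in>{S. S \<subseteq> {..<a + b} \<and> card S = a}. G S)"
  by (rule sum.reindex_bij_betw[OF bij_betw_shuffle_image])

lemma cprod_component_eq_sum_subsets:
  fixes W H :: "nat \<Rightarrow> 'e list \<Rightarrow> 'a list \<Rightarrow> 'r::comm_ring_1"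
  assumes "length es = a + b" "length \<alpha>s = i + j"
  shows "(\<Sum>\<sigma>\<in>shuffles a b. \<Sum>\<tau>\<in>shuffles i j.
        of_int (sign \<sigma>) * W i (map (\<lambda>l. es ! \<sigma> l) [0..<a]) (map (\<lambda>l. \<alpha>s ! \<tau> l) [0..<i])
          * H j (map (\<lambda>l. es ! \<sigma> l) [a..<a + b]) (map (\<lambda>l. \<alpha>s ! \<tau> l) [i..<i + j]))
    = (\<Sum>S\<in>{S. S \<subseteq> {..<a + b} \<and> card S = a}. \<Sum>T\<in>{T. T \<subseteq> {..<i + j} \<and> card T = i}.
        subset_sign S * W i (nths es S) (nths \<alpha>s T) * H j (nths es (- S)) (nths \<alpha>s (- T)))"
proof -
  have "(\<Sum>\<sigma>\<in>shuffles a b. \<Sum>\<tau>\<in>shuffles i j.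
        of_int (sign \<sigma>) * W i (map (\<lambda>l. es ! \<sigma> l) [0..<a]) (map (\<lambda>l. \<alpha>s ! \<tau> l) [0..<i])
          * H j (map (\<lambda>l. es ! \<sigma> l) [a..<a + b]) (map (\<lambda>l. \<alpha>s ! \<tau> l) [i..<i + j]))
    = (\<Sum>\<sigma>\<in>shuffles a b. \<Sum>\<tau>\<in>shuffles i j.
        subset_sign (\<sigma> ` {..<a}) * W i (nths es (\<sigma> ` {..<a})) (nths \<alpha>s (\<tau> ` {..<i}))
          * H j (nths es (- \<sigma> ` {..<a})) (nths \<alpha>s (- \<tau> ` {..<i})))"
    using assms
    by (intro sum.cong refl)
      (simp add: sign_shuffle_eq_subset_sign map_shuffle_front_eq_nths map_shuffle_back_eq_nths)
  also have "\<dots> = (\<Sum>S\<in>{S. S \<subseteq> {..<a + b} \<and> card S = a}. \<Sum>\<tau>\<in>shuffles i j.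
        subset_sign S * W i (nths es S) (nths \<alpha>s (\<tau> ` {..<i}))
          * H j (nths es (- S)) (nths \<alpha>s (- \<tau> ` {..<i})))"
    by (rule sum_shuffles_eq_sum_subsets)
  also have "\<dots> = (\<Sum>S\<in>{S. S \<subseteq> {..<a + b} \<and> card S = a}. \<Sum>T\<in>{T. T \<subseteq> {..<i + j} \<and> card T = i}.
        subset_sign S * W i (nths es S) (nths \<alpha>s T) * H j (nths es (- S)) (nths \<alpha>s (- T)))"
    by (intro sum.cong refl sum_shuffles_eq_sum_subsets)
  finally show ?thesis .
qed

lemma cprod_eq_subset_prod:
  fixes W H :: "nat \<Rightarrow> 'e list \<Rightarrow> 'a list \<Rightarrow> 'r::comm_ring_1"
  assumes len: "length es + 2 * k = p + q" "length \<alpha>s = k"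
  shows "cprod p W q H k es \<alpha>s = subset_prod p W H es \<alpha>s"
proof -
  define m where "m = length es"
  have index_set: "{i. i \<le> k \<and> 2 * i \<le> p \<and> p \<le> m + 2 * i} =
      {i. i \<le> k \<and> i \<le> p div 2 \<and> k - i \<le> q div 2}"
    using len unfolding m_def by auto
  have "cprod p W q H k es \<alpha>s = (\<Sum>i\<in>{i. i \<le> k \<and> i \<le> p div 2 \<and> k - i \<le> q div 2}.
      \<Sum>S\<in>{S. S \<subseteq> {..<m} \<and> card S = p - 2 * i}. \<Sum>T\<in>{T. T \<subseteq> {..<k} \<and> card T = i}.
        subset_sign S * W i (nths es S) (nths \<alpha>s T) * H (k - i) (nths es (- S)) (nths \<alpha>s (- T)))"
    unfolding cprod_def
  proof (rule sum.cong[OF refl])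
    fix i
    assume "i \<in> {i. i \<le> k \<and> i \<le> p div 2 \<and> k - i \<le> q div 2}"
    then have "p + q - 2 * k = (p - 2 * i) + (q - 2 * (k - i))" "m = (p - 2 * i) + (q - 2 * (k - i))"
      "k = i + (k - i)"
      using len unfolding m_def by auto
    then show "(\<Sum>\<sigma>\<in>shuffles (p - 2 * i) (q - 2 * (k - i)). \<Sum>\<tau>\<in>shuffles i (k - i).
        of_int (sign \<sigma>) * W i (map (\<lambda>l. es ! \<sigma> l) [0..<p - 2 * i]) (map (\<lambda>l. \<alpha>s ! \<tau> l) [0..<i])
          * H (k - i) (map (\<lambda>l. es ! \<sigma> l) [p - 2 * i..<p + q - 2 * k]) (map (\<lambda>l. \<alpha>s ! \<tau> l) [i..<k])) =
      (\<Sum>S\<in>{S. S \<subseteq> {..<m} \<and> card S = p - 2 * i}. \<Sum>T\<in>{T. T \<subseteq> {..<k} \<and> card T = i}.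
        subset_sign S * W i (nths es S) (nths \<alpha>s T) * H (k - i) (nths es (- S)) (nths \<alpha>s (- T)))"
      using cprod_component_eq_sum_subsets[of es "p - 2 * i" "q - 2 * (k - i)" \<alpha>s i "k - i" W H] len
      unfolding m_def by simp
  qed
  also have "\<dots> = subset_prod p W H es \<alpha>s"
    unfolding subset_prod_def len(2) m_def[symmetric]
    by (subst sum_Pow_graded) (simp_all add: index_set)
  finally show ?thesis .
qed

lemma subset_prod_toF:
  "subset_prod p \<omega> \<eta> es (map dR fs) = subset_prod p (toF dR \<omega>) (toF dR \<eta>) es fs"
  unfolding subset_prod_def toF_def nths_map length_map ..

definition subset_prod_when ::
  "(nat set \<Rightarrow> bool) \<Rightarrow> nat \<Rightarrow> (nat \<Rightarrow> 'e list \<Rightarrow> 'a list \<Rightarrow> 'r::comm_ring_1)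
    \<Rightarrow> (nat \<Rightarrow> 'e list \<Rightarrow> 'a list \<Rightarrow> 'r) \<Rightarrow> 'e list \<Rightarrow> 'a list \<Rightarrow> 'r"
where
  "subset_prod_when P p W H es fs = (\<Sum>S\<in>Pow {..<length es}. \<Sum>T\<in>Pow {..<length fs}.
     if P S \<and> card S + 2 * card T = p
     then subset_sign S * W (card T) (nths es S) (nths fs T)
       * H (length fs - card T) (nths es (- S)) (nths fs (- T))
     else 0)"

lemma subset_prod_split:
  "subset_prod p W H es fs = subset_prod_when P p W H es fs + subset_prod_when (\<lambda>S. \<not> P S) p W H es fs"
  unfolding subset_prod_def subset_prod_when_def sum.distrib[symmetric] by (intro sum.cong refl) auto

lemma subset_prod_add_left:
  "subset_prod p (\<lambda>k es fs. A k es fs + B k es fs + C k es fs) H es fs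
    = subset_prod p A H es fs + subset_prod p B H es fs + subset_prod p C H es fs"
  unfolding subset_prod_def by (simp add: sum.distrib[symmetric] algebra_simps if_distrib cong: if_cong)

lemma subset_prod_add_right:
  "subset_prod p W (\<lambda>k es fs. A k es fs + B k es fs + C k es fs) es fs
    = subset_prod p W A es fs + subset_prod p W B es fs + subset_prod p W C es fs"
  unfolding subset_prod_def by (simp add: sum.distrib[symmetric] algebra_simps if_distrib cong: if_cong)

lemma subset_prod_when_Cons_mem_0:
  "subset_prod_when (\<lambda>S. 0 \<in> S) p W H (x # es) fs = (\<Sum>S\<in>Pow {..<length es}. \<Sum>T\<in>Pow {..<length fs}.
    if card S + 1 + 2 * card T = p
    then subset_sign S * W (card T) (x # nths es S) (nths fs T)
      * H (length fs - card T) (nths es (- S)) (nths fs (- T))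
    else 0)"
  unfolding subset_prod_when_def length_Cons sum_Pow_Suc_if_mem[OF le0]
  by (intro sum.cong refl) (auto simp: card_ins subset_sign_ins_0 nths_Cons_ins_0 nths_Cons_Compl_ins_0
      finite_subset[OF _ finite_lessThan])

lemma subset_prod_when_Cons_nonmem_0:
  "subset_prod_when (\<lambda>S. 0 \<notin> S) p W H (x # es) fs =
    (-1) ^ p * subset_prod p W (\<lambda>k es fs. H k (x # es) fs) es fs"
  unfolding subset_prod_when_def subset_prod_def length_Cons sum_Pow_Suc_if_nonmem[OF le0]
    sum_distrib_left
  by (intro sum.cong refl) (auto simp: card_skip subset_sign_skip_0 nths_Cons_skip_0 nths_Cons_Compl_skip_0
      minus_one_power_iff finite_subset[OF _ finite_lessThan])

section \<open>The differential is a graded derivation of the product\<close>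

definition dF_dE ::
  "('r \<Rightarrow> 'e) \<Rightarrow> (nat \<Rightarrow> 'e list \<Rightarrow> 'r list \<Rightarrow> 'r::comm_ring_1) \<Rightarrow> nat \<Rightarrow> 'e list \<Rightarrow> 'r list \<Rightarrow> 'r"
where
  "dF_dE dE W k es fs = (\<Sum>\<mu><k. W (k - 1) (dE (fs ! \<mu>) # es) (del \<mu> fs))"

definition dF_rho ::
  "('e \<Rightarrow> 'r \<Rightarrow> 'r) \<Rightarrow> (nat \<Rightarrow> 'e list \<Rightarrow> 'r list \<Rightarrow> 'r::comm_ring_1) \<Rightarrow> nat \<Rightarrow> 'e list \<Rightarrow> 'r list \<Rightarrow> 'r"
where
  "dF_rho rho W k es fs = (\<Sum>i<length es. (-1) ^ i * rho (es ! i) (W k (del i es) fs))"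

definition dF_br ::
  "('e \<Rightarrow> 'e \<Rightarrow> 'e) \<Rightarrow> (nat \<Rightarrow> 'e list \<Rightarrow> 'r list \<Rightarrow> 'r::comm_ring_1) \<Rightarrow> nat \<Rightarrow> 'e list \<Rightarrow> 'r list \<Rightarrow> 'r"
where
  "dF_br br W k es fs =
    (\<Sum>j<length es. \<Sum>i<j. (-1) ^ Suc i * W k (del i (es[j := br (es ! i) (es ! j)])) fs)"

lemma dF_split:
  "dF br rho dE W = (\<lambda>k es fs. dF_dE dE W k es fs + dF_rho rho W k es fs + dF_br br W k es fs)"
  unfolding dF_def dF_dE_def dF_rho_def dF_br_def by (intro ext) simp

lemma dF_cong:
  assumes "\<And>k' es' fs'. length es' + 2 * length fs' + 1 = length es + 2 * length fs \<Longrightarrow> length fs' = k'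
      \<Longrightarrow> X k' es' fs' = Y k' es' fs'"
    and "length fs = k"
  shows "dF br rho dE X k es fs = dF br rho dE Y k es fs"
  unfolding dF_def using assms
  by (intro arg_cong2[where f="(+)"] sum.cong refl) (auto simp: length_del)

lemma dF_dE_nths:
  assumes "A \<subseteq> {..<length fs}"
  shows "dF_dE dE V (card A) es (nths fs A) =
    (\<Sum>\<mu>\<in>A. V (card A - 1) (dE (fs ! \<mu>) # es) (nths fs (A - {\<mu>})))"
proof -
  have "dF_dE dE V (card A) es (nths fs A) =
      (\<Sum>\<mu>\<in>A. V (card A - 1) (dE (nths fs A ! rank A \<mu>) # es) (del (rank A \<mu>) (nths fs A)))"
    unfolding dF_dE_def using assms by (simp add: sum_lessThan_card_rank finite_subset)
  also have "\<dots> = (\<Sum>\<mu>\<in>A. V (card A - 1) (dE (fs ! \<mu>) # es) (nths fs (A - {\<mu>})))"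
    using assms by (intro sum.cong refl) (auto simp: nth_nths_rank del_rank_nths)
  finally show ?thesis .
qed

lemma dF_dE_nths_Compl:
  assumes "T \<subseteq> {..<length fs}"
  shows "dF_dE dE V (length fs - card T) es (nths fs (- T)) =
    (\<Sum>\<mu>\<in>{..<length fs} - T.
      V (length fs - card T - 1) (dE (fs ! \<mu>) # es) (nths fs ({..<length fs} - T - {\<mu>})))"
  using dF_dE_nths[of "{..<length fs} - T" fs dE V es] assms
  by (simp add: nths_Compl[of fs] card_lessThan_Diff)

lemma dF_rho_nths:
  assumes "A \<subseteq> {..<length es}"
  shows "dF_rho rho V k (nths es A) fs =
    (\<Sum>i\<in>A. (-1) ^ rank A i * rho (es ! i) (V k (nths es (A - {i})) fs))"
proof -
  have "dF_rho rho V k (nths es A) fs =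
      (\<Sum>i\<in>A. (-1) ^ rank A i * rho (nths es A ! rank A i) (V k (del (rank A i) (nths es A)) fs))"
    unfolding dF_rho_def using assms
    by (simp add: length_nths_subset sum_lessThan_card_rank finite_subset)
  also have "\<dots> = (\<Sum>i\<in>A. (-1) ^ rank A i * rho (es ! i) (V k (nths es (A - {i})) fs))"
    using assms by (intro sum.cong refl) (auto simp: nth_nths_rank del_rank_nths)
  finally show ?thesis .
qed

lemma dF_br_nths:
  assumes "A \<subseteq> {..<length es}"
  shows "dF_br br V k (nths es A) fs = (\<Sum>j\<in>A. \<Sum>i\<in>{s\<in>A. s < j}.
    (-1) ^ Suc (rank A i) * V k (nths (es[j := br (es ! i) (es ! j)]) (A - {i})) fs)"
proof -
  have "dF_br br V k (nths es A) fs = (\<Sum>j\<in>A. \<Sum>i\<in>{s\<in>A. s < j}. (-1) ^ Suc (rank A i) *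
      V k (del (rank A i) ((nths es A)[rank A j := br (nths es A ! rank A i) (nths es A ! rank A j)]))
        fs)"
    unfolding dF_br_def using assms
    by (simp add: length_nths_subset sum_ordered_pairs_lessThan_card_rank finite_subset)
  also have "\<dots> = (\<Sum>j\<in>A. \<Sum>i\<in>{s\<in>A. s < j}.
      (-1) ^ Suc (rank A i) * V k (nths (es[j := br (es ! i) (es ! j)]) (A - {i})) fs)"
    using assms
    by (intro sum.cong refl) (auto simp: nth_nths_rank nths_list_update_mem[symmetric] del_rank_nths)
  finally show ?thesis .
qed

lemma subset_prod_dF_dE_left:
  fixes W H :: "nat \<Rightarrow> 'e list \<Rightarrow> 'r list \<Rightarrow> 'r::comm_ring_1"
  shows "subset_prod (Suc p) (dF_dE dE W) H es fs =
    (\<Sum>\<mu><length fs. subset_prod_when (\<lambda>S. 0 \<in> S) p W H (dE (fs ! \<mu>) # es) (del \<mu> fs))"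
proof -
  define K where "K = length fs"
  define Y where "Y \<mu> S T = (if card S + 2 * card T = Suc p
    then subset_sign S * W (card T - 1) (dE (fs ! \<mu>) # nths es S) (nths fs (T - {\<mu>}))
      * H (K - card T) (nths es (- S)) (nths fs (- T)) else 0)" for \<mu> S T
  have "subset_prod (Suc p) (dF_dE dE W) H es fs =
      (\<Sum>S\<in>Pow {..<length es}. \<Sum>T\<in>Pow {..<K}. \<Sum>\<mu>\<in>T. Y \<mu> S T)"
    unfolding subset_prod_def K_def
    by (intro sum.cong refl) (simp add: dF_dE_nths Y_def K_def sum_distrib_left sum_distrib_right)
  also have "\<dots> = (\<Sum>\<mu><K. \<Sum>S\<in>Pow {..<length es}. \<Sum>T\<in>Pow {..<K - 1}. Y \<mu> S (ins \<mu> T))"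
    by (simp add: sum_Pow_sum_mem sum.swap[of _ "{..<K}"])
  also have "\<dots> = (\<Sum>\<mu><K. subset_prod_when (\<lambda>S. 0 \<in> S) p W H (dE (fs ! \<mu>) # es) (del \<mu> fs))"
    unfolding subset_prod_when_Cons_mem_0
    by (intro sum.cong refl) (auto simp: Y_def K_def card_ins ins_minus nths_del length_del skip_Compl
        finite_subset[OF _ finite_lessThan])
  finally show ?thesis
    unfolding K_def .
qed

lemma subset_prod_dF_dE_right:
  fixes W H :: "nat \<Rightarrow> 'e list \<Rightarrow> 'r list \<Rightarrow> 'r::comm_ring_1"
  shows "subset_prod p W (dF_dE dE H) es fs =
    (\<Sum>\<mu><length fs. subset_prod p W (\<lambda>k es' fs'. H k (dE (fs ! \<mu>) # es') fs') es (del \<mu> fs))"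
proof -
  define K where "K = length fs"
  define Z where "Z \<mu> S T = (if card S + 2 * card T = p
    then subset_sign S * W (card T) (nths es S) (nths fs T)
      * H (K - card T - 1) (dE (fs ! \<mu>) # nths es (- S)) (nths fs ({..<K} - T - {\<mu>})) else 0)" for \<mu> S T
  have "subset_prod p W (dF_dE dE H) es fs =
      (\<Sum>S\<in>Pow {..<length es}. \<Sum>T\<in>Pow {..<K}. \<Sum>\<mu>\<in>{..<K} - T. Z \<mu> S T)"
    unfolding subset_prod_def K_def
    by (intro sum.cong refl) (simp add: dF_dE_nths_Compl Z_def K_def sum_distrib_left)
  also have "\<dots> = (\<Sum>\<mu><K. \<Sum>S\<in>Pow {..<length es}. \<Sum>T\<in>Pow {..<K - 1}. Z \<mu> S (skip \<mu> T))"
    by (simp add: sum_Pow_sum_nonmem sum.swap[of _ "{..<K}"])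
  also have "\<dots> = (\<Sum>\<mu><K. subset_prod p W (\<lambda>k es' fs'. H k (dE (fs ! \<mu>) # es') fs') es (del \<mu> fs))"
    unfolding subset_prod_def
    by (intro sum.cong refl) (auto simp: Z_def K_def card_skip nths_del length_del skip_Compl
        nths_lessThan_Diff_skip)
  finally show ?thesis
    unfolding K_def .
qed

lemma dF_dE_subset_prod:
  fixes W H :: "nat \<Rightarrow> 'e list \<Rightarrow> 'r list \<Rightarrow> 'r::comm_ring_1"
  shows "dF_dE dE (\<lambda>k es fs. subset_prod p W H es fs) (length fs) es fs =
    subset_prod (Suc p) (dF_dE dE W) H es fs + (-1) ^ p * subset_prod p W (dF_dE dE H) es fs"
proof -
  have "dF_dE dE (\<lambda>k es fs. subset_prod p W H es fs) (length fs) es fs =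
      (\<Sum>\<mu><length fs. subset_prod_when (\<lambda>S. 0 \<in> S) p W H (dE (fs ! \<mu>) # es) (del \<mu> fs)
        + (-1) ^ p * subset_prod p W (\<lambda>k es' fs'. H k (dE (fs ! \<mu>) # es') fs') es (del \<mu> fs))"
    unfolding dF_dE_def subset_prod_split[where P="\<lambda>S. 0 \<in> S"] subset_prod_when_Cons_nonmem_0 ..
  then show ?thesis
    by (simp add: subset_prod_dF_dE_left subset_prod_dF_dE_right sum.distrib sum_distrib_left)
qed

text \<open>After deleting \<open>e\<^sub>i\<close>, the bracket \<open>[e\<^sub>i, e\<^sub>j]\<close> (i < j) sits at position j - 1.\<close>

lemma subset_prod_dF_br_left:
  fixes W H :: "nat \<Rightarrow> 'e list \<Rightarrow> 'r list \<Rightarrow> 'r::comm_ring_1"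
  shows "subset_prod (Suc p) (dF_br br W) H es fs = (\<Sum>j<length es. \<Sum>i<j. (-1) ^ Suc i *
    subset_prod_when (\<lambda>S. j - 1 \<in> S) p W H (del i (es[j := br (es ! i) (es ! j)])) fs)"
proof -
  define n where "n = length es"
  define E where "E i j = es[j := br (es ! i) (es ! j)]" for i j
  define Y where "Y i j S T = (if card S + 2 * card T = Suc p
    then (subset_sign S * (-1) ^ Suc (rank S i)) * (W (card T) (nths (E i j) (S - {i})) (nths fs T)
      * H (length fs - card T) (nths es (- S)) (nths fs (- T))) else 0)" for i j S T
  have length_E: "length (E i j) = n" for i j
    by (simp add: E_def n_def)
  have nths_E: "j \<notin> A \<Longrightarrow> nths (E i j) A = nths es A" for i j A
    by (simp add: E_def nths_list_update_nonmem)
  have "subset_prod (Suc p) (dF_br br W) H es fs =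
      (\<Sum>S\<in>Pow {..<n}. \<Sum>T\<in>Pow {..<length fs}. \<Sum>j\<in>S. \<Sum>i\<in>{s\<in>S. s < j}. Y i j S T)"
    unfolding subset_prod_def n_def
    by (intro sum.cong refl)
      (simp add: dF_br_nths Y_def E_def sum_distrib_left sum_distrib_right algebra_simps)
  also have "\<dots> = (\<Sum>S\<in>Pow {..<n}. \<Sum>j\<in>S. \<Sum>i\<in>{s\<in>S. s < j}. \<Sum>T\<in>Pow {..<length fs}. Y i j S T)"
    by (intro sum.cong refl) (simp add: sum.swap[of _ "Pow _"])
  also have "\<dots> = (\<Sum>j<n. \<Sum>i<j. \<Sum>S\<in>Pow {..<n - 1}.
      if j \<in> ins i S then \<Sum>T\<in>Pow {..<length fs}. Y i j (ins i S) T else 0)"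
    by (rule sum_Pow_sum_pairs_mem)
  also have "\<dots> = (\<Sum>j<n. \<Sum>i<j. (-1) ^ Suc i * subset_prod_when (\<lambda>S. j - 1 \<in> S) p W H (del i (E i j)) fs)"
    unfolding subset_prod_when_def sum_distrib_left
    by (intro sum.cong refl) (auto simp: Y_def mem_ins card_ins ins_minus subset_sign_ins nths_del length_E
        length_del skip_Compl nths_E power_Suc finite_subset[OF _ finite_lessThan] if_distrib[of "(*) _"]
        mult.assoc cong: if_cong)
  finally show ?thesis
    unfolding n_def E_def .
qed

lemma subset_prod_dF_br_right:
  fixes W H :: "nat \<Rightarrow> 'e list \<Rightarrow> 'r list \<Rightarrow> 'r::comm_ring_1"
  shows "(-1) ^ p * subset_prod p W (dF_br br H) es fs = (\<Sum>j<length es. \<Sum>i<j. (-1) ^ Suc i *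
    subset_prod_when (\<lambda>S. j - 1 \<notin> S) p W H (del i (es[j := br (es ! i) (es ! j)])) fs)"
proof -
  define n where "n = length es"
  define E where "E i j = es[j := br (es ! i) (es ! j)]" for i j
  define Z where "Z i j S T = (if card S + 2 * card T = p
    then ((-1) ^ p * subset_sign S * (-1) ^ Suc (rank ({..<n} - S) i))
      * (W (card T) (nths es S) (nths fs T)
      * H (length fs - card T) (nths (E i j) ({..<n} - S - {i})) (nths fs (- T))) else 0)" for i j S T
  have length_E: "length (E i j) = n" for i j
    by (simp add: E_def n_def)
  have nths_E: "j \<notin> A \<Longrightarrow> nths (E i j) A = nths es A" for i j A
    by (simp add: E_def nths_list_update_nonmem)
  have "(-1) ^ p * subset_prod p W (dF_br br H) es fs = (\<Sum>S\<in>Pow {..<n}. \<Sum>T\<in>Pow {..<length fs}.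
      \<Sum>j\<in>{..<n} - S. \<Sum>i\<in>{s\<in>{..<n} - S. s < j}. Z i j S T)"
    unfolding subset_prod_def n_def sum_distrib_left
    by (intro sum.cong refl)
      (simp add: nths_Compl[of es] dF_br_nths Z_def E_def n_def sum_distrib_left algebra_simps)
  also have "\<dots> = (\<Sum>S\<in>Pow {..<n}. \<Sum>j\<in>{..<n} - S. \<Sum>i\<in>{s\<in>{..<n} - S. s < j}.
      \<Sum>T\<in>Pow {..<length fs}. Z i j S T)"
    by (intro sum.cong refl) (simp add: sum.swap[of _ "Pow _"])
  also have "\<dots> = (\<Sum>j<n. \<Sum>i<j. \<Sum>S\<in>Pow {..<n - 1}.
      if j \<notin> skip i S then \<Sum>T\<in>Pow {..<length fs}. Z i j (skip i S) T else 0)"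
    by (rule sum_Pow_sum_pairs_nonmem)
  also have "\<dots> = (\<Sum>j<n. \<Sum>i<j. (-1) ^ Suc i * subset_prod_when (\<lambda>S. j - 1 \<notin> S) p W H (del i (E i j)) fs)"
    unfolding subset_prod_when_def sum_distrib_left
    by (intro sum.cong refl) (auto simp: Z_def mem_skip card_skip subset_sign_skip_Compl nths_del length_E
        length_del skip_Compl nths_E nths_lessThan_Diff_skip[of "E _ _", unfolded length_E] power_Suc
        finite_subset[OF _ finite_lessThan] if_distrib[of "(*) _"] mult.assoc cong: if_cong)
  finally show ?thesis
    unfolding n_def E_def .
qed

lemma dF_br_subset_prod:
  fixes W H :: "nat \<Rightarrow> 'e list \<Rightarrow> 'r list \<Rightarrow> 'r::comm_ring_1"
  shows "dF_br br (\<lambda>k es fs. subset_prod p W H es fs) k es fs =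
    subset_prod (Suc p) (dF_br br W) H es fs + (-1) ^ p * subset_prod p W (dF_br br H) es fs"
proof -
  have "dF_br br (\<lambda>k es fs. subset_prod p W H es fs) k es fs = (\<Sum>j<length es. \<Sum>i<j. (-1) ^ Suc i *
      (subset_prod_when (\<lambda>S. j - 1 \<in> S) p W H (del i (es[j := br (es ! i) (es ! j)])) fs
        + subset_prod_when (\<lambda>S. j - 1 \<notin> S) p W H (del i (es[j := br (es ! i) (es ! j)])) fs))"
    unfolding dF_br_def by (intro sum.cong refl arg_cong[where f="(*) _"] subset_prod_split)
  then show ?thesis
    unfolding subset_prod_dF_br_left subset_prod_dF_br_right distrib_left sum.distrib .
qed

lemma subset_prod_dF_rho_left:
  fixes W H :: "nat \<Rightarrow> 'e list \<Rightarrow> 'r list \<Rightarrow> 'r::comm_ring_1"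
  shows "subset_prod (Suc p) (dF_rho rho W) H es fs =
    (\<Sum>i<length es. (-1) ^ i * subset_prod p (\<lambda>k es' fs'. rho (es ! i) (W k es' fs')) H (del i es) fs)"
proof -
  define n where "n = length es"
  define Y where "Y i S T = (if card S + 2 * card T = Suc p
    then (subset_sign S * (-1) ^ rank S i) * (rho (es ! i) (W (card T) (nths es (S - {i})) (nths fs T))
      * H (length fs - card T) (nths es (- S)) (nths fs (- T))) else 0)" for i S T
  have "subset_prod (Suc p) (dF_rho rho W) H es fs =
      (\<Sum>S\<in>Pow {..<n}. \<Sum>T\<in>Pow {..<length fs}. \<Sum>i\<in>S. Y i S T)"
    unfolding subset_prod_def n_def
    by (intro sum.cong refl)
      (simp add: dF_rho_nths Y_def sum_distrib_left sum_distrib_right algebra_simps)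
  also have "\<dots> = (\<Sum>S\<in>Pow {..<n}. \<Sum>i\<in>S. \<Sum>T\<in>Pow {..<length fs}. Y i S T)"
    by (rule sum.cong[OF refl]) (rule sum.swap)
  also have "\<dots> = (\<Sum>i<n. \<Sum>S\<in>Pow {..<n - 1}. \<Sum>T\<in>Pow {..<length fs}. Y i (ins i S) T)"
    by (rule sum_Pow_sum_mem)
  also have "\<dots> =
      (\<Sum>i<n. (-1) ^ i * subset_prod p (\<lambda>k es' fs'. rho (es ! i) (W k es' fs')) H (del i es) fs)"
    unfolding subset_prod_def sum_distrib_left
    by (intro sum.cong refl) (auto simp: Y_def n_def card_ins ins_minus subset_sign_ins nths_del length_del
        skip_Compl finite_subset[OF _ finite_lessThan])
  finally show ?thesis
    unfolding n_def .
qed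

lemma subset_prod_dF_rho_right:
  fixes W H :: "nat \<Rightarrow> 'e list \<Rightarrow> 'r list \<Rightarrow> 'r::comm_ring_1"
  shows "(-1) ^ p * subset_prod p W (dF_rho rho H) es fs =
    (\<Sum>i<length es. (-1) ^ i * subset_prod p W (\<lambda>k es' fs'. rho (es ! i) (H k es' fs')) (del i es) fs)"
proof -
  define n where "n = length es"
  define Z where "Z i S T = (if card S + 2 * card T = p
    then ((-1) ^ p * subset_sign S * (-1) ^ rank ({..<n} - S) i) * (W (card T) (nths es S) (nths fs T)
      * rho (es ! i) (H (length fs - card T) (nths es ({..<n} - S - {i})) (nths fs (- T))))
    else 0)" for i S T
  have "(-1) ^ p * subset_prod p W (dF_rho rho H) es fs =
      (\<Sum>S\<in>Pow {..<n}. \<Sum>T\<in>Pow {..<length fs}. \<Sum>i\<in>{..<n} - S. Z i S T)"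
    unfolding subset_prod_def n_def sum_distrib_left
    by (intro sum.cong refl)
      (simp add: nths_Compl[of es] dF_rho_nths Z_def n_def sum_distrib_left algebra_simps)
  also have "\<dots> = (\<Sum>S\<in>Pow {..<n}. \<Sum>i\<in>{..<n} - S. \<Sum>T\<in>Pow {..<length fs}. Z i S T)"
    by (rule sum.cong[OF refl]) (rule sum.swap)
  also have "\<dots> = (\<Sum>i<n. \<Sum>S\<in>Pow {..<n - 1}. \<Sum>T\<in>Pow {..<length fs}. Z i (skip i S) T)"
    by (rule sum_Pow_sum_nonmem)
  also have "\<dots> =
      (\<Sum>i<n. (-1) ^ i * subset_prod p W (\<lambda>k es' fs'. rho (es ! i) (H k es' fs')) (del i es) fs)"
    unfolding subset_prod_def sum_distrib_left
    by (intro sum.cong refl) (auto simp: Z_def n_def card_skip subset_sign_skip_Compl nths_del length_del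
        skip_Compl nths_lessThan_Diff_skip finite_subset[OF _ finite_lessThan] mult.assoc)
  finally show ?thesis
    unfolding n_def .
qed

locale derivation_family =
  fixes rho :: "'e \<Rightarrow> 'r::comm_ring_1 \<Rightarrow> 'r"
  assumes rho_add: "rho x (f + g) = rho x f + rho x g"
    and rho_mult: "rho x (f * g) = f * rho x g + g * rho x f"
begin

lemma rho_zero: "rho x 0 = 0"
  using rho_add[of x 0 0] by simp

lemma rho_sum: "rho x (\<Sum>a\<in>A. f a) = (\<Sum>a\<in>A. rho x (f a))"
  by (induction A rule: infinite_finite_induct) (simp_all add: rho_zero rho_add)

lemma rho_minus_one_power: "rho x ((-1) ^ m) = 0"
proof -
  have "rho x 1 = 0"
    using rho_mult[of x 1 1] by simp
  moreover have "rho x (-1) = 0"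
    using rho_add[of x 1 "-1"] rho_zero \<open>rho x 1 = 0\<close> by simp
  ultimately show ?thesis
    by (cases "even m") simp_all
qed

lemma rho_subset_sign: "rho x (subset_sign S) = 0"
  unfolding subset_sign_def by (rule rho_minus_one_power)

lemma subset_prod_derivation:
  "rho x (subset_prod p W H es fs) =
    subset_prod p (\<lambda>k es fs. rho x (W k es fs)) H es fs
      + subset_prod p W (\<lambda>k es fs. rho x (H k es fs)) es fs"
  unfolding subset_prod_def rho_sum sum.distrib[symmetric]
  by (intro sum.cong refl) (simp add: rho_zero rho_mult rho_subset_sign algebra_simps)

lemma dF_rho_subset_prod:
  "dF_rho rho (\<lambda>k es fs. subset_prod p W H es fs) k es fs =
    subset_prod (Suc p) (dF_rho rho W) H es fs + (-1) ^ p * subset_prod p W (dF_rho rho H) es fs"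
  unfolding dF_rho_def subset_prod_derivation subset_prod_dF_rho_left subset_prod_dF_rho_right
  by (simp add: sum.distrib distrib_left)

lemma dF_subset_prod:
  fixes W H :: "nat \<Rightarrow> 'e list \<Rightarrow> 'r list \<Rightarrow> 'r"
  shows "dF br rho dE (\<lambda>k es fs. subset_prod p W H es fs) (length fs) es fs =
    subset_prod (Suc p) (dF br rho dE W) H es fs + (-1) ^ p * subset_prod p W (dF br rho dE H) es fs"
  unfolding dF_split subset_prod_add_left subset_prod_add_right
    dF_dE_subset_prod dF_rho_subset_prod dF_br_subset_prod
  by (simp add: algebra_simps)

end

theorem mainTheorem1:
  fixes smE :: "'r::{comm_ring_1,real_algebra_1} \<Rightarrow> 'e::ab_group_add \<Rightarrow> 'e"
    and smO :: "'r \<Rightarrow> 'o::ab_group_add \<Rightarrow> 'o"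
    and dR :: "'r \<Rightarrow> 'o" and ip :: "'e \<Rightarrow> 'e \<Rightarrow> 'r" and br :: "'e \<Rightarrow> 'e \<Rightarrow> 'e"
    and rho :: "'e \<Rightarrow> 'r \<Rightarrow> 'r" and dE :: "'r \<Rightarrow> 'e"
    and p q :: nat and \<omega> \<eta> :: "nat \<Rightarrow> 'e list \<Rightarrow> 'o list \<Rightarrow> 'r"
  assumes "courant_algebroid smE smO dR ip br rho dE"
    and "cd_cochain smE smO dR ip p \<omega>"
    and "cd_cochain smE smO dR ip q \<eta>"
  shows "\<forall>k es fs. k \<le> (p + q + 1) div 2 \<longrightarrow> length es = p + q + 1 - 2 * k \<longrightarrow> length fs = k \<longrightarrow>
    dF br rho dE (toF dR (cprod p \<omega> q \<eta>)) k es fs =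
      cprod (p + 1) (dF br rho dE (toF dR \<omega>)) q (toF dR \<eta>) k es fs
      + (-1) ^ p * cprod p (toF dR \<omega>) (q + 1) (dF br rho dE (toF dR \<eta>)) k es fs"
proof (intro allI impI)
  fix k and es :: "'e list" and fs :: "'r list"
  assume "k \<le> (p + q + 1) div 2" "length es = p + q + 1 - 2 * k" and len_fs: "length fs = k"
  then have len: "length es + 2 * k = p + q + 1"
    by linarith
  have "\<forall>x f g. rho x (f + g) = rho x f + rho x g"
    using assms(1) unfolding courant_algebroid_def by (elim conjE)
  moreover have "\<forall>x f g. rho x (f * g) = f * rho x g + g * rho x f"
    using assms(1) unfolding courant_algebroid_def by (elim conjE)
  ultimately interpret derivation_family rho
    by unfold_locales blast+
  have "dF br rho dE (toF dR (cprod p \<omega> q \<eta>)) k es fs =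
      dF br rho dE (\<lambda>k es fs. subset_prod p (toF dR \<omega>) (toF dR \<eta>) es fs) k es fs"
    using len len_fs
    by (intro dF_cong[OF _ len_fs]) (simp add: toF_def cprod_eq_subset_prod subset_prod_toF[symmetric])
  also have "\<dots> = subset_prod (p + 1) (dF br rho dE (toF dR \<omega>)) (toF dR \<eta>) es fs
      + (-1) ^ p * subset_prod p (toF dR \<omega>) (dF br rho dE (toF dR \<eta>)) es fs"
    using dF_subset_prod[where fs=fs and es=es] len_fs by simp
  also have "\<dots> = cprod (p + 1) (dF br rho dE (toF dR \<omega>)) q (toF dR \<eta>) k es fs
      + (-1) ^ p * cprod p (toF dR \<omega>) (q + 1) (dF br rho dE (toF dR \<eta>)) k es fs"
    using len len_fs by (simp add: cprod_eq_subset_prod)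
  finally show "dF br rho dE (toF dR (cprod p \<omega> q \<eta>)) k es fs =
      cprod (p + 1) (dF br rho dE (toF dR \<omega>)) q (toF dR \<eta>) k es fs
      + (-1) ^ p * cprod p (toF dR \<omega>) (q + 1) (dF br rho dE (toF dR \<eta>)) k es fs" .
qed

end
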